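(* Let $\mathcal C,\mathcal D$ be parsummable categories and $F\colon\mathcal C\to\mathcal D$ a functor of underlying categories that preserves sums. Then: (1) $I\colon\mathcal C\to F_*\mathcal C$ is a morphism of parsummable categories; (2) if $F$ is essentially surjective, then $\hat F\colon F_*\mathcal C\to\mathcal D$ is an equivalence of categories; (3) as ordinary functors, $F=\hat F\circ I$.
   Context: Let $\omega=\{1,2,\dots\}$, $\mathcal M$ the monoid of injections $\omega\to\omega$, $E\mathcal M$ the category with objects $\mathcal M$ and unique morphisms between any two objects. An $E\mathcal M$-category is a small category with a strict $E\mathcal M$-action ($u_*$ the action of $u$, $u^X_\circ\colon X\to u_*X$ the isomorphism from $1\to u$); $\mathrm{supp}(X)$ is the intersection of finite $A\subset\omega$ with $u_*X=X$ for all $u$ fixing $A$ pointwise; tame means all supports finite. A parsummable category is a tame $E\mathcal M$-category with an object $0$ of empty support and a functor $+$ on the full subcategory $\mathcal C\boxtimes\mathcal C$ of disjointly supported pairs, strictly unital, associative, commutative and $E\mathcal M$-equivariant. A morphism of parsummable categories is a strictly $E\mathcal M$-equivariant functor preserving $0$ and $+$ strictly. A functor $F\colon\mathcal C\to\mathcal D$ of underlying categories preserves sums if $F(0)=0$, $F\times F$ maps $\mathcal C\boxtimes\mathcal C$ into $\mathcal D\boxtimes\mathcal D$, and $F$ commutes with $+$ on objects and morphisms. $F_*\mathcal C$ is the parsummable category whose objects are those of $\mathcal C$, with $\mathrm{Hom}_{F_*\mathcal C}(X,Y)=\mathrm{Hom}_{\mathcal D}(FX,FY)$, $\mathcal M$-action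 on objects as in $\mathcal C$, structure isomorphisms $u^X_\circ$ given by $F(u^X_\circ)$, sum of objects as in $\mathcal C$ and sum of morphisms as in $\mathcal D$. $I\colon\mathcal C\to F_*\mathcal C$ is the identity on objects and sends $f\colon X\to Y$ to $F(f)$. $\hat F\colon F_*\mathcal C\to\mathcal D$ is $F$ on objects and the identity on hom-sets. *)

theory Defs
  imports Main
begin

record ('o,'m) cat =
  cObj  :: "'o set"
  cMor  :: "'m set"
  cDom  :: "'m \<Rightarrow> 'o"
  cCod  :: "'m \<Rightarrow> 'o"
  cId   :: "'o \<Rightarrow> 'm"
  cComp :: "'m \<Rightarrow> 'm \<Rightarrow> 'm"   (* cComp C g f = g \<circ> f *)

definition hom :: "('o,'m,'z) cat_scheme \<Rightarrow> 'o \<Rightarrow> 'o \<Rightarrow> 'm set" where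
  "hom C X Y = {f \<in> cMor C. cDom C f = X \<and> cCod C f = Y}"

definition is_category :: "('o,'m,'z) cat_scheme \<Rightarrow> bool" where
  "is_category C \<longleftrightarrow>
     (\<forall>f\<in>cMor C. cDom C f \<in> cObj C \<and> cCod C f \<in> cObj C) \<and>
     (\<forall>X\<in>cObj C. cId C X \<in> hom C X X) \<and>
     (\<forall>f\<in>cMor C. \<forall>g\<in>cMor C. cCod C f = cDom C g \<longrightarrow>
        cComp C g f \<in> hom C (cDom C f) (cCod C g)) \<and>
     (\<forall>f\<in>cMor C. cComp C (cId C (cCod C f)) f = f \<and> cComp C f (cId C (cDom C f)) = f) \<and>
     (\<forall>f\<in>cMor C. \<forall>g\<in>cMor C. \<forall>h\<in>cMor C. cCod C f = cDom C g \<and> cCod C g = cDom C h \<longrightarrow>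
        cComp C h (cComp C g f) = cComp C (cComp C h g) f)"

definition is_functor ::
  "('o,'m,'z) cat_scheme \<Rightarrow> ('p,'n,'y) cat_scheme \<Rightarrow> ('o \<Rightarrow> 'p) \<Rightarrow> ('m \<Rightarrow> 'n) \<Rightarrow> bool" where
  "is_functor C D Fo Fm \<longleftrightarrow>
     is_category C \<and> is_category D \<and>
     (\<forall>X\<in>cObj C. Fo X \<in> cObj D) \<and>
     (\<forall>f\<in>cMor C. Fm f \<in> hom D (Fo (cDom C f)) (Fo (cCod C f))) \<and>
     (\<forall>X\<in>cObj C. Fm (cId C X) = cId D (Fo X)) \<and>
     (\<forall>f\<in>cMor C. \<forall>g\<in>cMor C. cCod C f = cDom C g \<longrightarrow>
        Fm (cComp C g f) = cComp D (Fm g) (Fm f))"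

definition is_iso :: "('o,'m,'z) cat_scheme \<Rightarrow> 'm \<Rightarrow> bool" where
  "is_iso C f \<longleftrightarrow> f \<in> cMor C \<and>
     (\<exists>g\<in>hom C (cCod C f) (cDom C f).
        cComp C g f = cId C (cDom C f) \<and> cComp C f g = cId C (cCod C f))"

definition iso_inv :: "('o,'m,'z) cat_scheme \<Rightarrow> 'm \<Rightarrow> 'm" where
  "iso_inv C f = (THE g. g \<in> hom C (cCod C f) (cDom C f) \<and>
        cComp C g f = cId C (cDom C f) \<and> cComp C f g = cId C (cCod C f))"

definition ess_surj ::
  "('o,'m,'z) cat_scheme \<Rightarrow> ('p,'n,'y) cat_scheme \<Rightarrow> ('o \<Rightarrow> 'p) \<Rightarrow> bool" where
  "ess_surj C D Fo \<longleftrightarrow>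
     (\<forall>Y\<in>cObj D. \<exists>X\<in>cObj C. \<exists>h\<in>hom D (Fo X) Y. is_iso D h)"

definition is_equivalence ::
  "('o,'m,'z) cat_scheme \<Rightarrow> ('p,'n,'y) cat_scheme \<Rightarrow> ('o \<Rightarrow> 'p) \<Rightarrow> ('m \<Rightarrow> 'n) \<Rightarrow> bool" where
  "is_equivalence C D Fo Fm \<longleftrightarrow>
     is_functor C D Fo Fm \<and>
     (\<exists>(Go :: 'p \<Rightarrow> 'o) (Gm :: 'n \<Rightarrow> 'm) (eta :: 'o \<Rightarrow> 'm) (eps :: 'p \<Rightarrow> 'n).
        is_functor D C Go Gm \<and>
        (\<forall>X\<in>cObj C. eta X \<in> hom C X (Go (Fo X)) \<and> is_iso C (eta X)) \<and>
        (\<forall>f\<in>cMor C. cComp C (eta (cCod C f)) f = cComp C (Gm (Fm f)) (eta (cDom C f))) \<and>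
        (\<forall>Y\<in>cObj D. eps Y \<in> hom D (Fo (Go Y)) Y \<and> is_iso D (eps Y)) \<and>
        (\<forall>g\<in>cMor D. cComp D (eps (cCod D g)) (Fm (Gm g)) = cComp D g (eps (cDom D g))))"

definition omega :: "nat set" where
  "omega = {n. 1 \<le> n}"

text \<open>An injection u of omega is represented by the unique injective map nat \<Rightarrow> nat
  extending it with u 0 = 0.\<close>
definition EMmon :: "(nat \<Rightarrow> nat) set" where
  "EMmon = {u. inj u \<and> u 0 = 0}"

text \<open>pActM C u v f is the action of the unique morphism u \<rightarrow> v of E\<M> on f : X \<rightarrow> Y,
  a morphism u_* X \<rightarrow> v_* Y; pActO C u X = u_* X.\<close>
record ('o,'m) pcat = "('o,'m) cat" +
  pActO  :: "(nat \<Rightarrow> nat) \<Rightarrow> 'o \<Rightarrow> 'o"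
  pActM  :: "(nat \<Rightarrow> nat) \<Rightarrow> (nat \<Rightarrow> nat) \<Rightarrow> 'm \<Rightarrow> 'm"
  pZero  :: "'o"
  pPlusO :: "'o \<Rightarrow> 'o \<Rightarrow> 'o"
  pPlusM :: "'m \<Rightarrow> 'm \<Rightarrow> 'm"

text \<open>Strict action of the strict monoidal category E\<M> (tensor = composition),
  i.e. a functor E\<M> \<times> C \<rightarrow> C that is strictly unital and associative.\<close>
definition is_EM_category :: "('o,'m,'z) pcat_scheme \<Rightarrow> bool" where
  "is_EM_category C \<longleftrightarrow>
     is_category C \<and>
     (\<forall>u\<in>EMmon. \<forall>X\<in>cObj C. pActO C u X \<in> cObj C) \<and>
     (\<forall>u\<in>EMmon. \<forall>v\<in>EMmon. \<forall>f\<in>cMor C.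
        pActM C u v f \<in> hom C (pActO C u (cDom C f)) (pActO C v (cCod C f))) \<and>
     (\<forall>u\<in>EMmon. \<forall>X\<in>cObj C. pActM C u u (cId C X) = cId C (pActO C u X)) \<and>
     (\<forall>u\<in>EMmon. \<forall>v\<in>EMmon. \<forall>w\<in>EMmon. \<forall>f\<in>cMor C. \<forall>g\<in>cMor C. cCod C f = cDom C g \<longrightarrow>
        cComp C (pActM C v w g) (pActM C u v f) = pActM C u w (cComp C g f)) \<and>
     (\<forall>X\<in>cObj C. pActO C id X = X) \<and>
     (\<forall>f\<in>cMor C. pActM C id id f = f) \<and>
     (\<forall>u\<in>EMmon. \<forall>v\<in>EMmon. \<forall>X\<in>cObj C. pActO C (u \<circ> v) X = pActO C u (pActO C v X)) \<and>
     (\<forall>u\<in>EMmon. \<forall>u'\<in>EMmon. \<forall>v\<in>EMmon. \<forall>v'\<in>EMmon. \<forall>f\<in>cMor C.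
        pActM C (u \<circ> v) (u' \<circ> v') f = pActM C u u' (pActM C v v' f))"

text \<open>The structure isomorphism u_\<circ>^X : X \<rightarrow> u_* X (action of 1 \<rightarrow> u on id_X).\<close>
definition circ :: "('o,'m,'z) pcat_scheme \<Rightarrow> (nat \<Rightarrow> nat) \<Rightarrow> 'o \<Rightarrow> 'm" where
  "circ C u X = pActM C id u (cId C X)"

definition em_supp :: "('o,'m,'z) pcat_scheme \<Rightarrow> 'o \<Rightarrow> nat set" where
  "em_supp C X = omega \<inter> \<Inter>{A. finite A \<and> A \<subseteq> omega \<and>
      (\<forall>u\<in>EMmon. (\<forall>a\<in>A. u a = a) \<longrightarrow> pActO C u X = X)}"

definition is_tame :: "('o,'m,'z) pcat_scheme \<Rightarrow> bool" where
  "is_tame C \<longleftrightarrow> is_EM_category C \<and> (\<forall>X\<in>cObj C. finite (em_supp C X))"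

definition disj :: "('o,'m,'z) pcat_scheme \<Rightarrow> 'o \<Rightarrow> 'o \<Rightarrow> bool" where
  "disj C X Y \<longleftrightarrow> em_supp C X \<inter> em_supp C Y = {}"

text \<open>A pair of morphisms (f,g) is a morphism of C \<boxtimes> C.\<close>
definition disjM :: "('o,'m,'z) pcat_scheme \<Rightarrow> 'm \<Rightarrow> 'm \<Rightarrow> bool" where
  "disjM C f g \<longleftrightarrow> f \<in> cMor C \<and> g \<in> cMor C \<and>
     disj C (cDom C f) (cDom C g) \<and> disj C (cCod C f) (cCod C g)"

definition parsummable :: "('o,'m,'z) pcat_scheme \<Rightarrow> bool" where
  "parsummable C \<longleftrightarrow>
     is_tame C \<and>
     pZero C \<in> cObj C \<and> em_supp C (pZero C) = {} \<and>
     \<comment> \<open>+ is a functor C \<boxtimes> C \<rightarrow> C\<close>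
     (\<forall>X\<in>cObj C. \<forall>Y\<in>cObj C. disj C X Y \<longrightarrow> pPlusO C X Y \<in> cObj C) \<and>
     (\<forall>f g. disjM C f g \<longrightarrow>
        pPlusM C f g \<in> hom C (pPlusO C (cDom C f) (cDom C g)) (pPlusO C (cCod C f) (cCod C g))) \<and>
     (\<forall>X\<in>cObj C. \<forall>Y\<in>cObj C. disj C X Y \<longrightarrow>
        pPlusM C (cId C X) (cId C Y) = cId C (pPlusO C X Y)) \<and>
     (\<forall>f f' g g'. disjM C f f' \<and> disjM C g g' \<and> cCod C f = cDom C g \<and> cCod C f' = cDom C g' \<longrightarrow>
        pPlusM C (cComp C g f) (cComp C g' f') = cComp C (pPlusM C g g') (pPlusM C f f')) \<and>
     \<comment> \<open>strictly unital\<close>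
     (\<forall>X\<in>cObj C. pPlusO C (pZero C) X = X \<and> pPlusO C X (pZero C) = X) \<and>
     (\<forall>f\<in>cMor C. pPlusM C (cId C (pZero C)) f = f \<and> pPlusM C f (cId C (pZero C)) = f) \<and>
     \<comment> \<open>associative\<close>
     (\<forall>X\<in>cObj C. \<forall>Y\<in>cObj C. \<forall>Z\<in>cObj C. disj C X Y \<and> disj C X Z \<and> disj C Y Z \<longrightarrow>
        pPlusO C (pPlusO C X Y) Z = pPlusO C X (pPlusO C Y Z)) \<and>
     (\<forall>f g h. disjM C f g \<and> disjM C f h \<and> disjM C g h \<longrightarrow>
        pPlusM C (pPlusM C f g) h = pPlusM C f (pPlusM C g h)) \<and>
     \<comment> \<open>commutative\<close>
     (\<forall>X\<in>cObj C. \<forall>Y\<in>cObj C. disj C X Y \<longrightarrow> pPlusO C X Y = pPlusO C Y X) \<and>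
     (\<forall>f g. disjM C f g \<longrightarrow> pPlusM C f g = pPlusM C g f) \<and>
     \<comment> \<open>E\<M>-equivariant (diagonal action on C \<boxtimes> C)\<close>
     (\<forall>u\<in>EMmon. \<forall>X\<in>cObj C. \<forall>Y\<in>cObj C. disj C X Y \<longrightarrow>
        pActO C u (pPlusO C X Y) = pPlusO C (pActO C u X) (pActO C u Y)) \<and>
     (\<forall>u\<in>EMmon. \<forall>v\<in>EMmon. \<forall>f g. disjM C f g \<longrightarrow>
        pActM C u v (pPlusM C f g) = pPlusM C (pActM C u v f) (pActM C u v g))"

definition ps_morphism ::
  "('o,'m,'z) pcat_scheme \<Rightarrow> ('p,'n,'y) pcat_scheme \<Rightarrow> ('o \<Rightarrow> 'p) \<Rightarrow> ('m \<Rightarrow> 'n) \<Rightarrow> bool" where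
  "ps_morphism C D Go Gm \<longleftrightarrow>
     parsummable C \<and> parsummable D \<and> is_functor C D Go Gm \<and>
     (\<forall>u\<in>EMmon. \<forall>X\<in>cObj C. Go (pActO C u X) = pActO D u (Go X)) \<and>
     (\<forall>u\<in>EMmon. \<forall>v\<in>EMmon. \<forall>f\<in>cMor C. Gm (pActM C u v f) = pActM D u v (Gm f)) \<and>
     Go (pZero C) = pZero D \<and>
     (\<forall>X\<in>cObj C. \<forall>Y\<in>cObj C. disj C X Y \<longrightarrow> Go (pPlusO C X Y) = pPlusO D (Go X) (Go Y)) \<and>
     (\<forall>f g. disjM C f g \<longrightarrow> Gm (pPlusM C f g) = pPlusM D (Gm f) (Gm g))"

definition preserves_sums ::
  "('o,'m,'z) pcat_scheme \<Rightarrow> ('p,'n,'y) pcat_scheme \<Rightarrow> ('o \<Rightarrow> 'p) \<Rightarrow> ('m \<Rightarrow> 'n) \<Rightarrow> bool" where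
  "preserves_sums C D Fo Fm \<longleftrightarrow>
     Fo (pZero C) = pZero D \<and>
     (\<forall>X\<in>cObj C. \<forall>Y\<in>cObj C. disj C X Y \<longrightarrow> disj D (Fo X) (Fo Y)) \<and>
     (\<forall>f g. disjM C f g \<longrightarrow> disjM D (Fm f) (Fm g)) \<and>
     (\<forall>X\<in>cObj C. \<forall>Y\<in>cObj C. disj C X Y \<longrightarrow> Fo (pPlusO C X Y) = pPlusO D (Fo X) (Fo Y)) \<and>
     (\<forall>f g. disjM C f g \<longrightarrow> Fm (pPlusM C f g) = pPlusM D (Fm f) (Fm g))"

text \<open>A morphism X \<rightarrow> Y of F_* C is a triple (X, g, Y) with g \<in> Hom_D(F X, F Y).
  The E\<M>-action on morphisms is the one determined by the object action and the
  structure isomorphisms F(u_\<circ>^X): (u \<rightarrow> v)_* g = F(v_\<circ>^Y) \<circ> g \<circ> F(u_\<circ>^X)^{-1}.\<close>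
definition pushC ::
  "('o,'m,'z) pcat_scheme \<Rightarrow> ('p,'n,'y) pcat_scheme \<Rightarrow> ('o \<Rightarrow> 'p) \<Rightarrow> ('m \<Rightarrow> 'n)
     \<Rightarrow> ('o, 'o \<times> 'n \<times> 'o) pcat" where
  "pushC C D Fo Fm = \<lparr>
     cObj = cObj C,
     cMor = {(X, g, Y). X \<in> cObj C \<and> Y \<in> cObj C \<and> g \<in> hom D (Fo X) (Fo Y)},
     cDom = (\<lambda>(X, g, Y). X),
     cCod = (\<lambda>(X, g, Y). Y),
     cId = (\<lambda>X. (X, cId D (Fo X), X)),
     cComp = (\<lambda>(Y, g, Z) (X, f, Y'). (X, cComp D g f, Z)),
     pActO = pActO C,
     pActM = (\<lambda>u v (X, g, Y). (pActO C u X,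
                 cComp D (Fm (circ C v Y)) (cComp D g (iso_inv D (Fm (circ C u X)))),
                 pActO C v Y)),
     pZero = pZero C,
     pPlusO = pPlusO C,
     pPlusM = (\<lambda>(X, g, Y) (X', g', Y'). (pPlusO C X X', pPlusM D g g', pPlusO C Y Y')) \<rparr>"

definition I_mor :: "('o,'m,'z) pcat_scheme \<Rightarrow> ('m \<Rightarrow> 'n) \<Rightarrow> 'm \<Rightarrow> 'o \<times> 'n \<times> 'o" where
  "I_mor C Fm f = (cDom C f, Fm f, cCod C f)"

definition Fhat_mor :: "'o \<times> 'n \<times> 'o \<Rightarrow> 'n" where
  "Fhat_mor = (\<lambda>(X, g, Y). g)"

end

theory Submission
  imports Defs "HOL-Library.Countable_Set"
begin

(* Parts (1) and (3) are bookkeeping: F_* C takes its objects, the action on objects and the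
  sum of objects from C and everything on morphisms from D, while I and F-hat are the identity
  on the relevant data.  I is equivariant on morphisms because the action of C on f : X -> Y
  is itself given by (u -> v)_* f = v_o^Y f (u_o^X)^-1.

  The substantial point is that F_* C is again parsummable: additivity of the action on
  morphisms needs u_* X and u_* Y to be disjointly supported whenever X and Y are, i.e.
  supp (u_* X) <= u (supp X).  This holds because u_* X only depends on the restriction of u
  to a finite support A of X: if u and u' agree on A, choose t agreeing with them on A whose
  image is the union of their images; then u s1 = t s2 and t s3 = u' s4 for injections
  s1, ..., s4 fixing A, and injections fixing A fix X.

  For (2), F-hat is the identity on hom-sets, hence fully faithful, and a fully faithful
  essentially surjective functor is an equivalence. *)

lemma homD: "f \<in> hom C X Y \<Longrightarrow> f \<in> cMor C \<and> cDom C f = X \<and> cCod C f = Y"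
  by (simp add: hom_def)

lemma mor_in_hom: "f \<in> cMor C \<Longrightarrow> f \<in> hom C (cDom C f) (cCod C f)"
  by (simp add: hom_def)

context
  fixes C :: "('o,'m,'z) cat_scheme"
  assumes cat: "is_category C"
begin

lemma cat_id_hom: "X \<in> cObj C \<Longrightarrow> cId C X \<in> hom C X X"
  using cat by (simp add: is_category_def)

lemma cat_comp_hom: "f \<in> hom C X Y \<Longrightarrow> g \<in> hom C Y Z \<Longrightarrow> cComp C g f \<in> hom C X Z"
  using cat unfolding is_category_def hom_def by auto

lemma cat_id_left: "f \<in> hom C X Y \<Longrightarrow> cComp C (cId C Y) f = f"
  using cat unfolding is_category_def hom_def by auto

lemma cat_id_right: "f \<in> hom C X Y \<Longrightarrow> cComp C f (cId C X) = f"
  using cat unfolding is_category_def hom_def by auto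

lemma cat_assoc: "f \<in> hom C W X \<Longrightarrow> g \<in> hom C X Y \<Longrightarrow> h \<in> hom C Y Z \<Longrightarrow>
    cComp C h (cComp C g f) = cComp C (cComp C h g) f"
  using cat unfolding is_category_def hom_def by auto

lemma cat_hom_objs: "f \<in> hom C X Y \<Longrightarrow> X \<in> cObj C \<and> Y \<in> cObj C"
  using cat unfolding is_category_def hom_def by auto

lemma cat_mor_objs: "f \<in> cMor C \<Longrightarrow> cDom C f \<in> cObj C \<and> cCod C f \<in> cObj C"
  using cat by (simp add: is_category_def)

lemma cat_simps:
  "f \<in> cMor C \<Longrightarrow> g \<in> cMor C \<Longrightarrow> cCod C f = cDom C g \<Longrightarrow> cComp C g f \<in> cMor C"
  "f \<in> cMor C \<Longrightarrow> g \<in> cMor C \<Longrightarrow> cCod C f = cDom C g \<Longrightarrow> cDom C (cComp C g f) = cDom C f"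
  "f \<in> cMor C \<Longrightarrow> g \<in> cMor C \<Longrightarrow> cCod C f = cDom C g \<Longrightarrow> cCod C (cComp C g f) = cCod C g"
  "f \<in> cMor C \<Longrightarrow> g \<in> cMor C \<Longrightarrow> h \<in> cMor C \<Longrightarrow> cCod C f = cDom C g \<Longrightarrow> cCod C g = cDom C h \<Longrightarrow>
     cComp C (cComp C h g) f = cComp C h (cComp C g f)"
  "f \<in> cMor C \<Longrightarrow> cCod C f = Y \<Longrightarrow> cComp C (cId C Y) f = f"
  "f \<in> cMor C \<Longrightarrow> cDom C f = X \<Longrightarrow> cComp C f (cId C X) = f"
  "Y \<in> cObj C \<Longrightarrow> cId C Y \<in> cMor C"
  "Y \<in> cObj C \<Longrightarrow> cDom C (cId C Y) = Y"
  "Y \<in> cObj C \<Longrightarrow> cCod C (cId C Y) = Y"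
  using cat unfolding is_category_def hom_def by auto

lemma iso_inv_unique:
  assumes f: "f \<in> hom C X Y" and g: "g \<in> hom C Y X"
    and gf: "cComp C g f = cId C X" and fg: "cComp C f g = cId C Y"
  shows "iso_inv C f = g"
proof -
  have dom_cod: "cDom C f = X" "cCod C f = Y" using f by (auto simp: hom_def)
  show ?thesis unfolding iso_inv_def dom_cod
  proof (rule the_equality)
    show "g \<in> hom C Y X \<and> cComp C g f = cId C X \<and> cComp C f g = cId C Y" using g gf fg by simp
    fix g' assume g': "g' \<in> hom C Y X \<and> cComp C g' f = cId C X \<and> cComp C f g' = cId C Y"
    have "g' = cComp C g' (cComp C f g)" using cat_id_right g' fg by metis
    also have "\<dots> = cComp C (cComp C g' f) g" using cat_assoc[OF g f] g' by blast
    also have "\<dots> = g" using g' cat_id_left[OF g] by simp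
    finally show "g' = g" .
  qed
qed

lemma iso_inv:
  assumes "is_iso C f" and f: "f \<in> hom C X Y"
  shows "iso_inv C f \<in> hom C Y X" "cComp C (iso_inv C f) f = cId C X"
    "cComp C f (iso_inv C f) = cId C Y"
proof -
  obtain g where "g \<in> hom C Y X" "cComp C g f = cId C X" "cComp C f g = cId C Y"
    using assms unfolding is_iso_def hom_def by auto
  with iso_inv_unique[OF f] show "iso_inv C f \<in> hom C Y X" "cComp C (iso_inv C f) f = cId C X"
    "cComp C f (iso_inv C f) = cId C Y" by auto
qed

end

lemma is_isoI:
  "f \<in> hom C X Y \<Longrightarrow> g \<in> hom C Y X \<Longrightarrow> cComp C g f = cId C X \<Longrightarrow> cComp C f g = cId C Y \<Longrightarrow>
    is_iso C f"
  unfolding is_iso_def hom_def by auto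

context
  fixes C :: "('o,'m,'z) cat_scheme" and D :: "('p,'n,'y) cat_scheme"
    and Fo :: "'o \<Rightarrow> 'p" and Fm :: "'m \<Rightarrow> 'n"
  assumes F: "is_functor C D Fo Fm"
begin

lemma functor_obj: "X \<in> cObj C \<Longrightarrow> Fo X \<in> cObj D"
  using F by (simp add: is_functor_def)

lemma functor_hom: "f \<in> hom C X Y \<Longrightarrow> Fm f \<in> hom D (Fo X) (Fo Y)"
  using F unfolding is_functor_def hom_def by auto

lemma functor_id: "X \<in> cObj C \<Longrightarrow> Fm (cId C X) = cId D (Fo X)"
  using F by (simp add: is_functor_def)

lemma functor_comp: "f \<in> hom C X Y \<Longrightarrow> g \<in> hom C Y Z \<Longrightarrow> Fm (cComp C g f) = cComp D (Fm g) (Fm f)"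
  using F unfolding is_functor_def hom_def by auto

end

definition fully_faithful ::
  "('o,'m,'z) cat_scheme \<Rightarrow> ('p,'n,'y) cat_scheme \<Rightarrow> ('o \<Rightarrow> 'p) \<Rightarrow> ('m \<Rightarrow> 'n) \<Rightarrow> bool" where
  "fully_faithful C D Fo Fm \<longleftrightarrow>
     (\<forall>X\<in>cObj C. \<forall>Y\<in>cObj C. bij_betw Fm (hom C X Y) (hom D (Fo X) (Fo Y)))"

lemma fully_faithful_preimage:
  assumes "fully_faithful C D Fo Fm" "X \<in> cObj C" "Y \<in> cObj C" "g \<in> hom D (Fo X) (Fo Y)"
  shows "inv_into (hom C X Y) Fm g \<in> hom C X Y \<and> Fm (inv_into (hom C X Y) Fm g) = g"
  using assms unfolding fully_faithful_def bij_betw_def by (auto intro: inv_into_into f_inv_into_f)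

lemma fully_faithful_inj:
  assumes "fully_faithful C D Fo Fm" "X \<in> cObj C" "Y \<in> cObj C"
    and "f \<in> hom C X Y" "f' \<in> hom C X Y" "Fm f = Fm f'"
  shows "f = f'"
  using assms unfolding fully_faithful_def bij_betw_def inj_on_def by blast

context
  fixes C :: "('o,'m,'z) cat_scheme" and D :: "('p,'n,'y) cat_scheme"
    and Fo :: "'o \<Rightarrow> 'p" and Fm :: "'m \<Rightarrow> 'n"
    and Xo :: "'p \<Rightarrow> 'o" and \<epsilon> :: "'p \<Rightarrow> 'n"
  assumes F: "is_functor C D Fo Fm" and ff: "fully_faithful C D Fo Fm"
    and counit_obj: "\<And>Y. Y \<in> cObj D \<Longrightarrow> Xo Y \<in> cObj C"
    and counit_hom: "\<And>Y. Y \<in> cObj D \<Longrightarrow> \<epsilon> Y \<in> hom D (Fo (Xo Y)) Y"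
    and counit_iso: "\<And>Y. Y \<in> cObj D \<Longrightarrow> is_iso D (\<epsilon> Y)"
begin

definition quasi_inverse_mor :: "'n \<Rightarrow> 'm" where
  "quasi_inverse_mor g = inv_into (hom C (Xo (cDom D g)) (Xo (cCod D g))) Fm
     (cComp D (iso_inv D (\<epsilon> (cCod D g))) (cComp D g (\<epsilon> (cDom D g))))"

definition unit_mor :: "'o \<Rightarrow> 'm" where
  "unit_mor X = inv_into (hom C X (Xo (Fo X))) Fm (iso_inv D (\<epsilon> (Fo X)))"

lemma ff_categories: "is_category C" "is_category D"
  using F by (simp_all add: is_functor_def)

lemma counit_inv_hom: "Y \<in> cObj D \<Longrightarrow> iso_inv D (\<epsilon> Y) \<in> hom D Y (Fo (Xo Y))"
  using iso_inv[OF ff_categories(2) counit_iso counit_hom] by blast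

lemma counit_simps:
  assumes "Y \<in> cObj D"
  shows "\<epsilon> Y \<in> cMor D" "cDom D (\<epsilon> Y) = Fo (Xo Y)" "cCod D (\<epsilon> Y) = Y"
    "iso_inv D (\<epsilon> Y) \<in> cMor D" "cDom D (iso_inv D (\<epsilon> Y)) = Y"
    "cCod D (iso_inv D (\<epsilon> Y)) = Fo (Xo Y)"
    "cComp D (\<epsilon> Y) (iso_inv D (\<epsilon> Y)) = cId D Y"
    "k \<in> cMor D \<Longrightarrow> cCod D k = Y \<Longrightarrow> cComp D (\<epsilon> Y) (cComp D (iso_inv D (\<epsilon> Y)) k) = k"
    "k \<in> cMor D \<Longrightarrow> cCod D k = Fo (Xo Y) \<Longrightarrow>
       cComp D (iso_inv D (\<epsilon> Y)) (cComp D (\<epsilon> Y) k) = k"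
proof -
  note inv = iso_inv[OF ff_categories(2) counit_iso[OF assms] counit_hom[OF assms]]
  show "\<epsilon> Y \<in> cMor D" "cDom D (\<epsilon> Y) = Fo (Xo Y)" "cCod D (\<epsilon> Y) = Y"
    "iso_inv D (\<epsilon> Y) \<in> cMor D" "cDom D (iso_inv D (\<epsilon> Y)) = Y"
    "cCod D (iso_inv D (\<epsilon> Y)) = Fo (Xo Y)"
    "cComp D (\<epsilon> Y) (iso_inv D (\<epsilon> Y)) = cId D Y"
    using inv counit_hom[OF assms] by (auto simp: hom_def)
  then show "k \<in> cMor D \<Longrightarrow> cCod D k = Y \<Longrightarrow> cComp D (\<epsilon> Y) (cComp D (iso_inv D (\<epsilon> Y)) k) = k"
    using cat_simps[OF ff_categories(2)] by metis
  show "k \<in> cMor D \<Longrightarrow> cCod D k = Fo (Xo Y) \<Longrightarrow>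
      cComp D (iso_inv D (\<epsilon> Y)) (cComp D (\<epsilon> Y) k) = k"
    using inv counit_hom[OF assms] cat_simps[OF ff_categories(2)] functor_obj[OF F counit_obj[OF assms]]
    by (metis homD)
qed

lemma quasi_inverse_mor:
  assumes g: "g \<in> cMor D"
  shows "quasi_inverse_mor g \<in> hom C (Xo (cDom D g)) (Xo (cCod D g))"
    "Fm (quasi_inverse_mor g) = cComp D (iso_inv D (\<epsilon> (cCod D g))) (cComp D g (\<epsilon> (cDom D g)))"
proof -
  have objs: "cDom D g \<in> cObj D" "cCod D g \<in> cObj D" using cat_mor_objs[OF ff_categories(2) g] by auto
  have "cComp D (iso_inv D (\<epsilon> (cCod D g))) (cComp D g (\<epsilon> (cDom D g)))
      \<in> hom D (Fo (Xo (cDom D g))) (Fo (Xo (cCod D g)))"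
    using cat_comp_hom[OF ff_categories(2) cat_comp_hom[OF ff_categories(2) counit_hom mor_in_hom[OF g]]
        counit_inv_hom] objs by blast
  then show "quasi_inverse_mor g \<in> hom C (Xo (cDom D g)) (Xo (cCod D g))"
    "Fm (quasi_inverse_mor g) = cComp D (iso_inv D (\<epsilon> (cCod D g))) (cComp D g (\<epsilon> (cDom D g)))"
    using fully_faithful_preimage[OF ff counit_obj counit_obj] objs
    unfolding quasi_inverse_mor_def by blast+
qed

lemma quasi_inverse_functor: "is_functor D C Xo quasi_inverse_mor"
  unfolding is_functor_def
proof (intro conjI ballI impI ff_categories counit_obj)
  fix g assume "g \<in> cMor D"
  then show "quasi_inverse_mor g \<in> hom C (Xo (cDom D g)) (Xo (cCod D g))"
    by (rule quasi_inverse_mor)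
next
  fix Y assume Y: "Y \<in> cObj D"
  show "quasi_inverse_mor (cId D Y) = cId C (Xo Y)"
  proof (rule fully_faithful_inj[OF ff counit_obj[OF Y] counit_obj[OF Y]])
    show "quasi_inverse_mor (cId D Y) \<in> hom C (Xo Y) (Xo Y)"
      using quasi_inverse_mor(1)[of "cId D Y"] Y cat_simps[OF ff_categories(2)] by simp
    show "cId C (Xo Y) \<in> hom C (Xo Y) (Xo Y)" using cat_id_hom[OF ff_categories(1) counit_obj[OF Y]] .
    show "Fm (quasi_inverse_mor (cId D Y)) = Fm (cId C (Xo Y))"
      using quasi_inverse_mor(2)[of "cId D Y"] Y cat_simps[OF ff_categories(2)] counit_simps[OF Y]
        functor_id[OF F counit_obj[OF Y]]
      by (simp add: iso_inv[OF ff_categories(2) counit_iso[OF Y] counit_hom[OF Y]])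
  qed
next
  fix f g assume f: "f \<in> cMor D" and g: "g \<in> cMor D" and fg: "cCod D f = cDom D g"
  have objs: "cDom D f \<in> cObj D" "cDom D g \<in> cObj D" "cCod D g \<in> cObj D"
    using cat_mor_objs[OF ff_categories(2)] f g fg by metis+
  have hom_f: "quasi_inverse_mor f \<in> hom C (Xo (cDom D f)) (Xo (cDom D g))"
    using quasi_inverse_mor(1)[OF f] fg by simp
  have hom_g: "quasi_inverse_mor g \<in> hom C (Xo (cDom D g)) (Xo (cCod D g))"
    using quasi_inverse_mor(1)[OF g] .
  show "quasi_inverse_mor (cComp D g f) = cComp C (quasi_inverse_mor g) (quasi_inverse_mor f)"
  proof (rule fully_faithful_inj[OF ff counit_obj[OF objs(1)] counit_obj[OF objs(3)]])
    show "quasi_inverse_mor (cComp D g f) \<in> hom C (Xo (cDom D f)) (Xo (cCod D g))"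
      using quasi_inverse_mor(1)[of "cComp D g f"] f g fg cat_simps[OF ff_categories(2)] by simp
    show "cComp C (quasi_inverse_mor g) (quasi_inverse_mor f) \<in> hom C (Xo (cDom D f)) (Xo (cCod D g))"
      using cat_comp_hom[OF ff_categories(1) hom_f hom_g] .
    show "Fm (quasi_inverse_mor (cComp D g f))
        = Fm (cComp C (quasi_inverse_mor g) (quasi_inverse_mor f))"
      using quasi_inverse_mor(2)[OF f] quasi_inverse_mor(2)[OF g] quasi_inverse_mor(2)[of "cComp D g f"]
        functor_comp[OF F hom_f hom_g] f g fg objs counit_simps cat_simps[OF ff_categories(2)]
      by simp
  qed
qed

lemma unit_mor:
  assumes X: "X \<in> cObj C"
  shows "unit_mor X \<in> hom C X (Xo (Fo X))" "Fm (unit_mor X) = iso_inv D (\<epsilon> (Fo X))"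
  using fully_faithful_preimage[OF ff X counit_obj counit_inv_hom] functor_obj[OF F X]
  unfolding unit_mor_def by blast+

lemma unit_iso: "X \<in> cObj C \<Longrightarrow> is_iso C (unit_mor X)"
proof -
  assume X: "X \<in> cObj C"
  have FX: "Fo X \<in> cObj D" using functor_obj[OF F X] .
  define inv where "inv = inv_into (hom C (Xo (Fo X)) X) Fm (\<epsilon> (Fo X))"
  have inv: "inv \<in> hom C (Xo (Fo X)) X" "Fm inv = \<epsilon> (Fo X)"
    using fully_faithful_preimage[OF ff counit_obj[OF FX] X] counit_hom[OF FX]
    unfolding inv_def by blast+
  note eps = iso_inv[OF ff_categories(2) counit_iso[OF FX] counit_hom[OF FX]]
  show ?thesis
  proof (rule is_isoI[OF unit_mor(1)[OF X] inv(1)])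
    show "cComp C inv (unit_mor X) = cId C X"
      using fully_faithful_inj[OF ff X X cat_comp_hom[OF ff_categories(1) unit_mor(1)[OF X] inv(1)]
          cat_id_hom[OF ff_categories(1) X]]
        functor_comp[OF F unit_mor(1)[OF X] inv(1)] unit_mor(2)[OF X] inv(2) eps(3)
        functor_id[OF F X] by simp
    show "cComp C (unit_mor X) inv = cId C (Xo (Fo X))"
      using fully_faithful_inj[OF ff counit_obj[OF FX] counit_obj[OF FX]
          cat_comp_hom[OF ff_categories(1) inv(1) unit_mor(1)[OF X]]
          cat_id_hom[OF ff_categories(1) counit_obj[OF FX]]]
        functor_comp[OF F inv(1) unit_mor(1)[OF X]] unit_mor(2)[OF X] inv(2) eps(2)
        functor_id[OF F counit_obj[OF FX]] by simp
  qed
qed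

lemma unit_natural:
  assumes f: "f \<in> cMor C"
  shows "cComp C (unit_mor (cCod C f)) f = cComp C (quasi_inverse_mor (Fm f)) (unit_mor (cDom C f))"
proof -
  let ?X = "cDom C f" and ?Y = "cCod C f"
  have objs: "?X \<in> cObj C" "?Y \<in> cObj C" "Fo ?X \<in> cObj D" "Fo ?Y \<in> cObj D"
    using cat_mor_objs[OF ff_categories(1) f] functor_obj[OF F] by auto
  have Ff: "Fm f \<in> hom D (Fo ?X) (Fo ?Y)" using functor_hom[OF F mor_in_hom[OF f]] .
  have quasi: "quasi_inverse_mor (Fm f) \<in> hom C (Xo (Fo ?X)) (Xo (Fo ?Y))"
    "Fm (quasi_inverse_mor (Fm f)) = cComp D (iso_inv D (\<epsilon> (Fo ?Y))) (cComp D (Fm f) (\<epsilon> (Fo ?X)))"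
    using quasi_inverse_mor[of "Fm f"] Ff by (auto simp: hom_def)
  show ?thesis
  proof (rule fully_faithful_inj[OF ff objs(1) counit_obj[OF objs(4)]])
    show "cComp C (unit_mor ?Y) f \<in> hom C ?X (Xo (Fo ?Y))"
      using cat_comp_hom[OF ff_categories(1) mor_in_hom[OF f] unit_mor(1)[OF objs(2)]] .
    show "cComp C (quasi_inverse_mor (Fm f)) (unit_mor ?X) \<in> hom C ?X (Xo (Fo ?Y))"
      using cat_comp_hom[OF ff_categories(1) unit_mor(1)[OF objs(1)] quasi(1)] .
    show "Fm (cComp C (unit_mor ?Y) f) = Fm (cComp C (quasi_inverse_mor (Fm f)) (unit_mor ?X))"
      using functor_comp[OF F mor_in_hom[OF f] unit_mor(1)[OF objs(2)]]
        functor_comp[OF F unit_mor(1)[OF objs(1)] quasi(1)] quasi(2)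
        unit_mor(2)[OF objs(1)] unit_mor(2)[OF objs(2)] Ff[unfolded hom_def]
        counit_simps[OF objs(3)] counit_simps[OF objs(4)] cat_simps[OF ff_categories(2)]
      by simp
  qed
qed

lemma counit_natural:
  "g \<in> cMor D \<Longrightarrow>
    cComp D (\<epsilon> (cCod D g)) (Fm (quasi_inverse_mor g)) = cComp D g (\<epsilon> (cDom D g))"
  using quasi_inverse_mor(2) cat_mor_objs[OF ff_categories(2)] counit_simps
    cat_simps[OF ff_categories(2)]
  by simp

end

theorem fully_faithful_ess_surj_equivalence:
  assumes F: "is_functor C D Fo Fm" and "fully_faithful C D Fo Fm" and "ess_surj C D Fo"
  shows "is_equivalence C D Fo Fm"
proof -
  obtain Xo \<epsilon> where counit: "\<forall>Y\<in>cObj D. Xo Y \<in> cObj C \<and> \<epsilon> Y \<in> hom D (Fo (Xo Y)) Y \<and> is_iso D (\<epsilon> Y)"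
    using \<open>ess_surj C D Fo\<close> unfolding ess_surj_def by metis
  note quasi_inverse = assms(1,2) counit[rule_format, THEN conjunct1]
    counit[rule_format, THEN conjunct2, THEN conjunct1] counit[rule_format, THEN conjunct2, THEN
        conjunct2]
  show ?thesis
    unfolding is_equivalence_def
    using F quasi_inverse_functor[OF quasi_inverse] unit_mor(1)[OF quasi_inverse]
      unit_iso[OF quasi_inverse] unit_natural[OF quasi_inverse] counit
      counit_natural[OF quasi_inverse]
    by blast
qed

lemma id_in_EMmon: "id \<in> EMmon"
  by (simp add: EMmon_def)

lemma EMmon_comp: "u \<in> EMmon \<Longrightarrow> v \<in> EMmon \<Longrightarrow> u \<circ> v \<in> EMmon"
  by (auto simp: EMmon_def inj_compose)

definition circ_inv :: "('o,'m,'z) pcat_scheme \<Rightarrow> (nat \<Rightarrow> nat) \<Rightarrow> 'o \<Rightarrow> 'm" where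
  "circ_inv C u X = pActM C u id (cId C X)"

context
  fixes C :: "('o,'m,'z) pcat_scheme"
  assumes EM: "is_EM_category C"
begin

lemma em_category: "is_category C"
  using EM by (simp add: is_EM_category_def)

lemma em_act_obj: "u \<in> EMmon \<Longrightarrow> X \<in> cObj C \<Longrightarrow> pActO C u X \<in> cObj C"
  using EM by (simp add: is_EM_category_def)

lemma em_act_hom:
  "u \<in> EMmon \<Longrightarrow> v \<in> EMmon \<Longrightarrow> f \<in> hom C X Y \<Longrightarrow> pActM C u v f \<in> hom C (pActO C u X) (pActO C v Y)"
  using EM unfolding is_EM_category_def hom_def by auto

lemma em_act_id: "u \<in> EMmon \<Longrightarrow> X \<in> cObj C \<Longrightarrow> pActM C u u (cId C X) = cId C (pActO C u X)"
  using EM by (simp add: is_EM_category_def)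

lemma em_act_functorial:
  "u \<in> EMmon \<Longrightarrow> v \<in> EMmon \<Longrightarrow> w \<in> EMmon \<Longrightarrow> f \<in> hom C X Y \<Longrightarrow> g \<in> hom C Y Z \<Longrightarrow>
    cComp C (pActM C v w g) (pActM C u v f) = pActM C u w (cComp C g f)"
  using EM unfolding is_EM_category_def hom_def by auto

lemma em_act_id_obj: "X \<in> cObj C \<Longrightarrow> pActO C id X = X"
  using EM by (simp add: is_EM_category_def)

lemma em_act_id_mor: "f \<in> cMor C \<Longrightarrow> pActM C id id f = f"
  using EM by (simp add: is_EM_category_def)

lemma em_act_comp: "u \<in> EMmon \<Longrightarrow> v \<in> EMmon \<Longrightarrow> X \<in> cObj C \<Longrightarrow>
    pActO C (u \<circ> v) X = pActO C u (pActO C v X)"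
  using EM by (simp add: is_EM_category_def)

lemma em_act_comp_mor: "u \<in> EMmon \<Longrightarrow> u' \<in> EMmon \<Longrightarrow> v \<in> EMmon \<Longrightarrow> v' \<in> EMmon \<Longrightarrow> f \<in> cMor C \<Longrightarrow>
    pActM C (u \<circ> v) (u' \<circ> v') f = pActM C u u' (pActM C v v' f)"
  using EM by (simp add: is_EM_category_def)

lemma circ_hom: "u \<in> EMmon \<Longrightarrow> X \<in> cObj C \<Longrightarrow> circ C u X \<in> hom C X (pActO C u X)"
  unfolding circ_def using em_act_hom[OF id_in_EMmon _ cat_id_hom[OF em_category]] em_act_id_obj by
    metis

lemma circ_inv_hom: "u \<in> EMmon \<Longrightarrow> X \<in> cObj C \<Longrightarrow> circ_inv C u X \<in> hom C (pActO C u X) X"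
  unfolding circ_inv_def using em_act_hom[OF _ id_in_EMmon cat_id_hom[OF em_category]] em_act_id_obj
    by metis

lemma circ_circ_inv:
  "u \<in> EMmon \<Longrightarrow> X \<in> cObj C \<Longrightarrow> cComp C (circ C u X) (circ_inv C u X) = cId C (pActO C u X)"
  unfolding circ_def circ_inv_def
  using em_act_functorial[OF _ id_in_EMmon _ cat_id_hom[OF em_category] cat_id_hom[OF em_category]]
    cat_id_left[OF em_category cat_id_hom[OF em_category]] em_act_id by metis

lemma circ_inv_circ: "u \<in> EMmon \<Longrightarrow> X \<in> cObj C \<Longrightarrow> cComp C (circ_inv C u X) (circ C u X) = cId C X"
  unfolding circ_def circ_inv_def
  using em_act_functorial[OF id_in_EMmon _ id_in_EMmon cat_id_hom[OF em_category]
      cat_id_hom[OF em_category]]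
    cat_id_left[OF em_category cat_id_hom[OF em_category]] em_act_id[OF id_in_EMmon] em_act_id_obj
        by metis

lemma circ_id: "X \<in> cObj C \<Longrightarrow> circ C id X = cId C X"
  unfolding circ_def using em_act_id_mor cat_id_hom[OF em_category] homD by metis

lemma circ_inv_id: "X \<in> cObj C \<Longrightarrow> circ_inv C id X = cId C X"
  unfolding circ_inv_def using em_act_id_mor cat_id_hom[OF em_category] homD by metis

lemma circ_natural:
  assumes u: "u \<in> EMmon" and v: "v \<in> EMmon" and f: "f \<in> hom C X Y"
  shows "cComp C (pActM C u v f) (circ C u X) = cComp C (circ C v Y) f"
proof -
  have X: "X \<in> cObj C" and Y: "Y \<in> cObj C" using cat_hom_objs[OF em_category f] by auto
  have "cComp C (pActM C u v f) (circ C u X) = pActM C id v (cComp C f (cId C X))"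
    unfolding circ_def using em_act_functorial[OF id_in_EMmon u v cat_id_hom[OF em_category X] f] .
  also have "\<dots> = pActM C id v (cComp C (cId C Y) f)"
    using cat_id_left[OF em_category f] cat_id_right[OF em_category f] by simp
  also have "\<dots> = cComp C (circ C v Y) (pActM C id id f)"
    unfolding circ_def
    using em_act_functorial[OF id_in_EMmon id_in_EMmon v f cat_id_hom[OF em_category Y]] by simp
  also have "\<dots> = cComp C (circ C v Y) f" using em_act_id_mor f homD by metis
  finally show ?thesis .
qed

lemma em_act_mor_decomp:
  assumes u: "u \<in> EMmon" and v: "v \<in> EMmon" and f: "f \<in> hom C X Y"
  shows "pActM C u v f = cComp C (circ C v Y) (cComp C f (circ_inv C u X))"
proof -
  have X: "X \<in> cObj C" and Y: "Y \<in> cObj C" using cat_hom_objs[OF em_category f] by auto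
  have act: "pActM C u v f \<in> hom C (pActO C u X) (pActO C v Y)" using em_act_hom[OF u v f] .
  have "pActM C u v f = cComp C (pActM C u v f) (cComp C (circ C u X) (circ_inv C u X))"
    using circ_circ_inv[OF u X] cat_id_right[OF em_category act] by simp
  also have "\<dots> = cComp C (cComp C (circ C v Y) f) (circ_inv C u X)"
    using cat_assoc[OF em_category circ_inv_hom[OF u X] circ_hom[OF u X] act] circ_natural[OF u v f]
    by simp
  also have "\<dots> = cComp C (circ C v Y) (cComp C f (circ_inv C u X))"
    using cat_assoc[OF em_category circ_inv_hom[OF u X] f circ_hom[OF v Y]] by simp
  finally show ?thesis .
qed

lemma circ_comp:
  assumes u: "u \<in> EMmon" and v: "v \<in> EMmon" and Y: "Y \<in> cObj C"
  shows "circ C (u \<circ> v) Y = cComp C (circ C u (pActO C v Y)) (circ C v Y)"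
proof -
  have h: "circ C v Y \<in> hom C Y (pActO C v Y)" using circ_hom[OF v Y] .
  have "circ C (u \<circ> v) Y = pActM C (id \<circ> id) (u \<circ> v) (cId C Y)" by (simp add: circ_def)
  also have "\<dots> = pActM C id u (circ C v Y)"
    unfolding circ_def
    using em_act_comp_mor[OF id_in_EMmon u id_in_EMmon v] cat_id_hom[OF em_category Y] homD
    by metis
  also have "\<dots> = cComp C (circ C u (pActO C v Y)) (circ C v Y)"
    using em_act_mor_decomp[OF id_in_EMmon u h] circ_inv_id[OF Y] cat_id_right[OF em_category h] by simp
  finally show ?thesis .
qed

lemma circ_inv_comp:
  assumes u: "u \<in> EMmon" and v: "v \<in> EMmon" and X: "X \<in> cObj C"
  shows "circ_inv C (u \<circ> v) X = cComp C (circ_inv C v X) (circ_inv C u (pActO C v X))"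
proof -
  have h: "circ_inv C v X \<in> hom C (pActO C v X) X" using circ_inv_hom[OF v X] .
  have "circ_inv C (u \<circ> v) X = pActM C (u \<circ> v) (id \<circ> id) (cId C X)" by (simp add: circ_inv_def)
  also have "\<dots> = pActM C u id (circ_inv C v X)"
    unfolding circ_inv_def
    using em_act_comp_mor[OF u id_in_EMmon v id_in_EMmon] cat_id_hom[OF em_category X] homD
    by metis
  also have "\<dots> = cComp C (circ_inv C v X) (circ_inv C u (pActO C v X))"
    using em_act_mor_decomp[OF u id_in_EMmon h] circ_id[OF X] cat_id_left[OF em_category]
      cat_comp_hom[OF em_category circ_inv_hom[OF u] h] em_act_obj[OF v X] by metis
  finally show ?thesis .
qed

end

lemma EMmon_omega:
  assumes "u \<in> EMmon" "a \<in> omega"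
  shows "u a \<in> omega"
proof -
  have "inj u" "u 0 = 0" using assms(1) by (simp_all add: EMmon_def)
  have "a \<noteq> 0" using assms(2) by (simp add: omega_def)
  with \<open>inj u\<close> have "u a \<noteq> u 0" unfolding inj_def by blast
  then show ?thesis using \<open>u 0 = 0\<close> by (simp add: omega_def)
qed

lemma bij_betw_Compl_infinite:
  fixes B P :: "nat set"
  assumes "finite B" "infinite P"
  obtains f where "bij_betw f (- B) P"
proof -
  have "infinite (- B)" using assms(1) by (simp add: Compl_eq_Diff_UNIV)
  then obtain e1 :: "nat \<Rightarrow> nat" where "bij_betw e1 (- B) UNIV"
    using countableE_infinite[OF countableI_type] by blast
  moreover obtain e2 :: "nat \<Rightarrow> nat" where "bij_betw e2 UNIV P"
    using countable_infiniteE'[OF countableI_type assms(2)] by blast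
  ultimately show ?thesis using that bij_betw_trans by blast
qed

lemma EMmon_piecewise:
  assumes "inj_on g B" "inj_on h (- B)" "g ` B \<inter> h ` (- B) = {}" "0 \<in> B" "g 0 = 0"
  shows "(\<lambda>n. if n \<in> B then g n else h n) \<in> EMmon"
proof -
  let ?t = "\<lambda>n. if n \<in> B then g n else h n"
  have "inj_on ?t B" "inj_on ?t (- B)"
    using assms(1,2) inj_on_cong[of B ?t g] inj_on_cong[of "- B" ?t h] by simp_all
  moreover have "?t ` B \<inter> ?t ` (- B) = {}" using assms(3) by simp
  moreover have "B - - B = B" "- B - B = - B" by auto
  ultimately have "inj_on ?t (B \<union> - B)" by (subst inj_on_Un) simp
  then show ?thesis using assms(4,5) by (simp add: EMmon_def)
qed

lemma EMmon_extend_onto: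
  assumes u: "u \<in> EMmon" and B: "finite B" "0 \<in> B" and R: "u ` B \<subseteq> R" "infinite R"
  obtains t where "t \<in> EMmon" "\<forall>b\<in>B. t b = u b" "range t = R"
proof -
  obtain f where f: "bij_betw f (- B) (R - u ` B)"
    using bij_betw_Compl_infinite B R by (metis Diff_infinite_finite finite_imageI)
  then have f_inj: "inj_on f (- B)" and f_image: "f ` (- B) = R - u ` B"
    by (auto simp: bij_betw_def)
  let ?t = "\<lambda>n. if n \<in> B then u n else f n"
  have "inj_on u B" using u inj_on_subset[of u UNIV B] by (simp add: EMmon_def)
  then have "?t \<in> EMmon"
    using EMmon_piecewise[OF _ f_inj] f_image u B(2) by (simp add: EMmon_def Diff_disjoint)
  moreover have "range ?t = u ` B \<union> f ` (- B)" by auto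
  then have "range ?t = R" using f_image R(1) by auto
  ultimately show ?thesis using that by simp
qed

lemma EMmon_lift_along:
  assumes w: "w \<in> EMmon" and "0 \<in> B" and f: "inj_on f (- B)" "f ` (- B) \<subseteq> range w - w ` B"
  shows "(\<lambda>n. if n \<in> B then n else inv w (f n)) \<in> EMmon"
    and "w \<circ> (\<lambda>n. if n \<in> B then n else inv w (f n)) = (\<lambda>n. if n \<in> B then w n else f n)"
proof -
  have w_inv: "w (inv w (f n)) = f n" if "n \<in> - B" for n
  proof (rule f_inv_into_f)
    show "f n \<in> range w" using f(2) that by blast
  qed
  have "inj_on (\<lambda>n. inv w (f n)) (- B)"
    using comp_inj_on[OF f(1) inj_on_inv_into, of w UNIV] f(2) unfolding comp_def by blast
  moreover have "inv w (f n) \<notin> B" if "n \<in> - B" for n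
  proof
    assume "inv w (f n) \<in> B"
    then have "f n \<in> w ` B" using w_inv[OF that] by (metis image_eqI)
    then show False using f(2) that by blast
  qed
  then have "id ` B \<inter> (\<lambda>n. inv w (f n)) ` (- B) = {}" by auto
  ultimately have "(\<lambda>n. if n \<in> B then id n else inv w (f n)) \<in> EMmon"
    using \<open>0 \<in> B\<close> by (intro EMmon_piecewise) auto
  then show "(\<lambda>n. if n \<in> B then n else inv w (f n)) \<in> EMmon" by (simp only: id_apply)
  show "w \<circ> (\<lambda>n. if n \<in> B then n else inv w (f n)) = (\<lambda>n. if n \<in> B then w n else f n)"
    using w_inv by auto
qed

lemma EMmon_common_factor:
  assumes u: "u \<in> EMmon" and t: "t \<in> EMmon" and B: "finite B" "0 \<in> B"
    and agree: "\<forall>b\<in>B. u b = t b" and inf: "infinite (range u \<inter> range t)"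
  obtains s s' where "s \<in> EMmon" "s' \<in> EMmon" "\<forall>b\<in>B. s b = b" "\<forall>b\<in>B. s' b = b"
    "u \<circ> s = t \<circ> s'"
proof -
  have "t ` B = u ` B" using agree by (auto simp: image_def)
  obtain f where f: "bij_betw f (- B) (range u \<inter> range t - u ` B)"
    using bij_betw_Compl_infinite B inf by (metis Diff_infinite_finite finite_imageI)
  then have f_inj: "inj_on f (- B)"
    and f_range: "f ` (- B) \<subseteq> range u - u ` B" "f ` (- B) \<subseteq> range t - t ` B"
    using \<open>t ` B = u ` B\<close> by (auto simp: bij_betw_def)
  note lift_u = EMmon_lift_along[OF u B(2) f_inj f_range(1)]
  note lift_t = EMmon_lift_along[OF t B(2) f_inj f_range(2)]
  have "(\<lambda>n. if n \<in> B then u n else f n) = (\<lambda>n. if n \<in> B then t n else f n)"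
    using agree by auto
  then show ?thesis
    using that[OF lift_u(1) lift_t(1)] lift_u(2) lift_t(2) by simp
qed

definition supports :: "('o,'m,'z) pcat_scheme \<Rightarrow> nat set \<Rightarrow> 'o \<Rightarrow> bool" where
  "supports C A X \<longleftrightarrow> finite A \<and> A \<subseteq> omega \<and> (\<forall>u\<in>EMmon. (\<forall>a\<in>A. u a = a) \<longrightarrow> pActO C u X = X)"

lemma em_supp_eq: "em_supp C X = omega \<inter> \<Inter>{A. supports C A X}"
  by (simp add: em_supp_def supports_def)

context
  fixes C :: "('o,'m,'z) pcat_scheme"
  assumes EM: "is_EM_category C"
begin

lemma act_eq_if_common_factor:
  assumes X: "X \<in> cObj C" and fixes_X: "\<forall>s\<in>EMmon. (\<forall>b\<in>B. s b = b) \<longrightarrow> pActO C s X = X"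
    and "w \<in> EMmon" "w' \<in> EMmon" "s \<in> EMmon" "s' \<in> EMmon" "\<forall>b\<in>B. s b = b" "\<forall>b\<in>B. s' b = b"
    and "w \<circ> s = w' \<circ> s'"
  shows "pActO C w X = pActO C w' X"
proof -
  have "pActO C w X = pActO C w (pActO C s X)" using fixes_X assms(5,7) by simp
  also have "\<dots> = pActO C (w' \<circ> s') X" using em_act_comp[OF EM assms(3,5) X] assms(9) by simp
  also have "\<dots> = pActO C w' X" using em_act_comp[OF EM assms(4,6) X] fixes_X assms(6,8) by simp
  finally show ?thesis .
qed

lemma act_eq_if_agree_on_support:
  assumes X: "X \<in> cObj C" and A: "supports C A X"
    and u: "u \<in> EMmon" and u': "u' \<in> EMmon" and agree: "\<forall>a\<in>A. u a = u' a"
  shows "pActO C u X = pActO C u' X"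
proof -
  \<comment> \<open>0 is added because the injections built by \<open>EMmon_piecewise\<close> must fix it.\<close>
  let ?B = "insert 0 A"
  have B: "finite ?B" "0 \<in> ?B" using A by (auto simp: supports_def)
  have agree_B: "\<forall>b\<in>?B. u b = u' b" using agree u u' by (auto simp: EMmon_def)
  have fixes_X: "\<forall>s\<in>EMmon. (\<forall>b\<in>?B. s b = b) \<longrightarrow> pActO C s X = X"
    using A by (auto simp: supports_def)
  have inf: "infinite (range u)" "infinite (range u')"
    using u u' by (auto simp: EMmon_def range_inj_infinite)
  have "u ` ?B \<subseteq> range u \<union> range u'" "infinite (range u \<union> range u')" using inf by auto
  then obtain t where t: "t \<in> EMmon" "\<forall>b\<in>?B. t b = u b" "range t = range u \<union> range u'"
    using EMmon_extend_onto[OF u B] by blast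
  have "\<forall>b\<in>?B. u b = t b" "infinite (range u \<inter> range t)"
    using t(2,3) inf(1) by (simp_all add: Int_absorb2)
  then obtain s1 s2 where "s1 \<in> EMmon" "s2 \<in> EMmon" "\<forall>b\<in>?B. s1 b = b" "\<forall>b\<in>?B. s2 b = b"
    "u \<circ> s1 = t \<circ> s2"
    using EMmon_common_factor[OF u t(1) B] by blast
  then have "pActO C u X = pActO C t X" by (rule act_eq_if_common_factor[OF X fixes_X u t(1)])
  have "\<forall>b\<in>?B. t b = u' b" "infinite (range t \<inter> range u')"
    using t(2,3) inf(2) agree_B by (simp_all add: Int_absorb1)
  then obtain s3 s4 where "s3 \<in> EMmon" "s4 \<in> EMmon" "\<forall>b\<in>?B. s3 b = b" "\<forall>b\<in>?B. s4 b = b"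
    "t \<circ> s3 = u' \<circ> s4"
    using EMmon_common_factor[OF t(1) u' B] by blast
  then have "pActO C t X = pActO C u' X" by (rule act_eq_if_common_factor[OF X fixes_X t(1) u'])
  with \<open>pActO C u X = pActO C t X\<close> show ?thesis by simp
qed

lemma supports_act:
  assumes X: "X \<in> cObj C" and A: "supports C A X" and u: "u \<in> EMmon"
  shows "supports C (u ` A) (pActO C u X)"
  unfolding supports_def
proof (intro conjI ballI impI)
  show "finite (u ` A)" "u ` A \<subseteq> omega" using A EMmon_omega[OF u] by (auto simp: supports_def)
  fix w assume w: "w \<in> EMmon" "\<forall>a\<in>u ` A. w a = a"
  have "pActO C w (pActO C u X) = pActO C (w \<circ> u) X" using em_act_comp[OF EM] w u X by simp
  also have "\<dots> = pActO C u X"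
    using act_eq_if_agree_on_support[OF X A EMmon_comp[OF w(1) u] u] w(2) by simp
  finally show "pActO C w (pActO C u X) = pActO C u X" .
qed

end

lemma em_supp_act_subset:
  assumes tame: "is_tame C" and X: "X \<in> cObj C" and u: "u \<in> EMmon"
  shows "em_supp C (pActO C u X) \<subseteq> u ` em_supp C X"
proof
  have EM: "is_EM_category C" using tame by (simp add: is_tame_def)
  have "\<exists>A0. supports C A0 X"
  proof (rule ccontr)
    assume "\<nexists>A0. supports C A0 X"
    then have "em_supp C X = omega" by (simp add: em_supp_eq)
    moreover have "infinite omega" unfolding omega_def
      by (metis atLeast_def infinite_Ici)
    moreover have "finite (em_supp C X)" using tame X by (simp add: is_tame_def)
    ultimately show False by simp
  qed
  then obtain A0 where A0: "supports C A0 X" ..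
  fix z assume "z \<in> em_supp C (pActO C u X)"
  then have z_in: "z \<in> u ` A" if "supports C A X" for A
    using supports_act[OF EM X that u] by (auto simp: em_supp_eq)
  obtain y where y: "y \<in> A0" "z = u y" using z_in[OF A0] by blast
  have "inj u" using u by (simp add: EMmon_def)
  then have "y \<in> A" if "supports C A X" for A
    using z_in[OF that] y by (auto dest: injD)
  moreover have "y \<in> omega" using A0 y by (auto simp: supports_def)
  ultimately show "z \<in> u ` em_supp C X" using y by (auto simp: em_supp_eq)
qed

lemma disj_act:
  assumes "is_tame C" "X \<in> cObj C" "Y \<in> cObj C" "u \<in> EMmon" "disj C X Y"
  shows "disj C (pActO C u X) (pActO C u Y)"
proof -
  have "inj u" using assms(4) by (simp add: EMmon_def)
  then have "u ` em_supp C X \<inter> u ` em_supp C Y = {}"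
    using assms(5) by (auto simp: disj_def dest: injD)
  then show ?thesis
    using em_supp_act_subset[OF assms(1,2,4)] em_supp_act_subset[OF assms(1,3,4)]
    unfolding disj_def by blast
qed

context
  fixes C :: "('o,'m,'z) pcat_scheme"
  assumes PS: "parsummable C"
begin

lemma ps_tame: "is_tame C"
  using PS by (simp add: parsummable_def)

lemma ps_EM: "is_EM_category C"
  using ps_tame by (simp add: is_tame_def)

lemma ps_zero: "pZero C \<in> cObj C" "em_supp C (pZero C) = {}"
  using PS by (simp_all add: parsummable_def)

lemma ps_plus_obj: "X \<in> cObj C \<Longrightarrow> Y \<in> cObj C \<Longrightarrow> disj C X Y \<Longrightarrow> pPlusO C X Y \<in> cObj C"
  using PS by (simp add: parsummable_def)

lemma ps_plus_hom: "disjM C f g \<Longrightarrow>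
    pPlusM C f g \<in> hom C (pPlusO C (cDom C f) (cDom C g)) (pPlusO C (cCod C f) (cCod C g))"
  using PS by (simp add: parsummable_def)

lemma ps_plus_id: "X \<in> cObj C \<Longrightarrow> Y \<in> cObj C \<Longrightarrow> disj C X Y \<Longrightarrow>
    pPlusM C (cId C X) (cId C Y) = cId C (pPlusO C X Y)"
  using PS by (simp add: parsummable_def)

lemma ps_plus_interchange:
  assumes "disjM C f f'" "disjM C g g'" "cCod C f = cDom C g" "cCod C f' = cDom C g'"
  shows "pPlusM C (cComp C g f) (cComp C g' f') = cComp C (pPlusM C g g') (pPlusM C f f')"
proof -
  have "\<forall>f f' g g'. disjM C f f' \<and> disjM C g g' \<and> cCod C f = cDom C g \<and> cCod C f' = cDom C g' \<longrightarrow>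
      pPlusM C (cComp C g f) (cComp C g' f') = cComp C (pPlusM C g g') (pPlusM C f f')"
    using PS unfolding parsummable_def by (elim conjE) assumption
  then show ?thesis using assms by blast
qed

lemma ps_zero_unit_obj: "X \<in> cObj C \<Longrightarrow> pPlusO C (pZero C) X = X \<and> pPlusO C X (pZero C) = X"
  using PS by (simp add: parsummable_def)

lemma ps_zero_unit_mor:
  "f \<in> cMor C \<Longrightarrow> pPlusM C (cId C (pZero C)) f = f \<and> pPlusM C f (cId C (pZero C)) = f"
  using PS by (simp add: parsummable_def)

lemma ps_plus_assoc_obj: "X \<in> cObj C \<Longrightarrow> Y \<in> cObj C \<Longrightarrow> Z \<in> cObj C \<Longrightarrow>
    disj C X Y \<Longrightarrow> disj C X Z \<Longrightarrow> disj C Y Z \<Longrightarrow> pPlusO C (pPlusO C X Y) Z = pPlusO C X (pPlusO C Y Z)"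
  using PS unfolding parsummable_def by blast

lemma ps_plus_assoc_mor: "disjM C f g \<Longrightarrow> disjM C f h \<Longrightarrow> disjM C g h \<Longrightarrow>
    pPlusM C (pPlusM C f g) h = pPlusM C f (pPlusM C g h)"
  using PS unfolding parsummable_def by blast

lemma ps_plus_comm_obj: "X \<in> cObj C \<Longrightarrow> Y \<in> cObj C \<Longrightarrow> disj C X Y \<Longrightarrow> pPlusO C X Y = pPlusO C Y X"
  using PS unfolding parsummable_def by blast

lemma ps_plus_comm_mor: "disjM C f g \<Longrightarrow> pPlusM C f g = pPlusM C g f"
  using PS unfolding parsummable_def by blast

lemma ps_act_plus_obj: "u \<in> EMmon \<Longrightarrow> X \<in> cObj C \<Longrightarrow> Y \<in> cObj C \<Longrightarrow> disj C X Y \<Longrightarrow>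
    pActO C u (pPlusO C X Y) = pPlusO C (pActO C u X) (pActO C u Y)"
  using PS unfolding parsummable_def by blast

lemma ps_act_plus_mor: "u \<in> EMmon \<Longrightarrow> v \<in> EMmon \<Longrightarrow> disjM C f g \<Longrightarrow>
    pActM C u v (pPlusM C f g) = pPlusM C (pActM C u v f) (pActM C u v g)"
  using PS unfolding parsummable_def by blast

lemma ps_circ_plus: "u \<in> EMmon \<Longrightarrow> X \<in> cObj C \<Longrightarrow> Y \<in> cObj C \<Longrightarrow> disj C X Y \<Longrightarrow>
    circ C u (pPlusO C X Y) = pPlusM C (circ C u X) (circ C u Y)"
  unfolding circ_def
  using ps_plus_id ps_act_plus_mor[OF id_in_EMmon] cat_id_hom[OF em_category[OF ps_EM]] homD
  by (metis disjM_def)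

lemma ps_circ_inv_plus: "u \<in> EMmon \<Longrightarrow> X \<in> cObj C \<Longrightarrow> Y \<in> cObj C \<Longrightarrow> disj C X Y \<Longrightarrow>
    circ_inv C u (pPlusO C X Y) = pPlusM C (circ_inv C u X) (circ_inv C u Y)"
  unfolding circ_inv_def
  using ps_plus_id ps_act_plus_mor[OF _ id_in_EMmon] cat_id_hom[OF em_category[OF ps_EM]] homD
  by (metis disjM_def)

end

lemma disjM_homI: "f \<in> hom C X Y \<Longrightarrow> g \<in> hom C X' Y' \<Longrightarrow> disj C X X' \<Longrightarrow> disj C Y Y' \<Longrightarrow> disjM C f g"
  by (simp add: disjM_def hom_def)


locale sum_preserving_functor =
  fixes C :: "('a,'b) pcat" and D :: "('c,'d) pcat" and Fo :: "'a \<Rightarrow> 'c" and Fm :: "'b \<Rightarrow> 'd"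
  assumes parsummable_C: "parsummable C" and parsummable_D: "parsummable D"
    and F: "is_functor C D Fo Fm" and sums: "preserves_sums C D Fo Fm"
begin

abbreviation P :: "('a, 'a \<times> 'd \<times> 'a) pcat" where
  "P \<equiv> pushC C D Fo Fm"

lemma EM_C: "is_EM_category C"
  using ps_EM[OF parsummable_C] .

lemma cat_C: "is_category C"
  using em_category[OF EM_C] .

lemma cat_D: "is_category D"
  using em_category[OF ps_EM[OF parsummable_D]] .

lemma F_zero: "Fo (pZero C) = pZero D"
  using sums by (simp add: preserves_sums_def)

lemma F_disj: "X \<in> cObj C \<Longrightarrow> Y \<in> cObj C \<Longrightarrow> disj C X Y \<Longrightarrow> disj D (Fo X) (Fo Y)"
  using sums by (simp add: preserves_sums_def)

lemma F_plus_obj: "X \<in> cObj C \<Longrightarrow> Y \<in> cObj C \<Longrightarrow> disj C X Y \<Longrightarrow> Fo (pPlusO C X Y) = pPlusO D (Fo X) (Fo Y)"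
  using sums by (simp add: preserves_sums_def)

lemma F_plus_mor: "disjM C f g \<Longrightarrow> Fm (pPlusM C f g) = pPlusM D (Fm f) (Fm g)"
  using sums by (simp add: preserves_sums_def)

lemma pushC_simps:
  "cObj P = cObj C"
  "(X, g, Y) \<in> cMor P \<longleftrightarrow> X \<in> cObj C \<and> Y \<in> cObj C \<and> g \<in> hom D (Fo X) (Fo Y)"
  "cDom P (X, g, Y) = X"
  "cCod P (X, g, Y) = Y"
  "cId P X = (X, cId D (Fo X), X)"
  "cComp P (Y, g, Z) (X, f, Y') = (X, cComp D g f, Z)"
  "pActO P = pActO C"
  "pZero P = pZero C"
  "pPlusO P = pPlusO C"
  "pPlusM P (X, g, Y) (X', g', Y') = (pPlusO C X X', pPlusM D g g', pPlusO C Y Y')"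
  by (simp_all add: pushC_def)

lemma pushC_hom:
  "(X', g, Y') \<in> hom P X Y \<longleftrightarrow> X' = X \<and> Y' = Y \<and> X \<in> cObj C \<and> Y \<in> cObj C \<and> g \<in> hom D (Fo X) (Fo Y)"
  by (auto simp: hom_def pushC_simps)

lemma pushC_morE:
  assumes "f \<in> cMor P"
  obtains X g Y where "f = (X, g, Y)" "X \<in> cObj C" "Y \<in> cObj C" "g \<in> hom D (Fo X) (Fo Y)"
  using assms by (cases f) (auto simp: pushC_simps)

lemma pushC_em_supp: "em_supp P = em_supp C"
  by (simp add: em_supp_def[abs_def] pushC_simps)

lemma pushC_disj: "disj P = disj C"
  by (simp add: disj_def[abs_def] pushC_em_supp)

lemma pushC_disjM:
  "disjM P (X, a, Y) (X', b, Y') \<longleftrightarrow> X \<in> cObj C \<and> Y \<in> cObj C \<and> a \<in> hom D (Fo X) (Fo Y) \<and>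
     X' \<in> cObj C \<and> Y' \<in> cObj C \<and> b \<in> hom D (Fo X') (Fo Y') \<and> disj C X X' \<and> disj C Y Y'"
  by (auto simp: disjM_def pushC_simps pushC_disj)

lemma F_circ_hom: "u \<in> EMmon \<Longrightarrow> X \<in> cObj C \<Longrightarrow> Fm (circ C u X) \<in> hom D (Fo X) (Fo (pActO C u X))"
  using functor_hom[OF F circ_hom[OF EM_C]] by blast

lemma F_circ_inv_hom:
  "u \<in> EMmon \<Longrightarrow> X \<in> cObj C \<Longrightarrow> Fm (circ_inv C u X) \<in> hom D (Fo (pActO C u X)) (Fo X)"
  using functor_hom[OF F circ_inv_hom[OF EM_C]] by blast

lemma F_circ_F_circ_inv:
  "u \<in> EMmon \<Longrightarrow> X \<in> cObj C \<Longrightarrow> cComp D (Fm (circ C u X)) (Fm (circ_inv C u X)) = cId D (Fo (pActO C u X))"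
  using functor_comp[OF F circ_inv_hom[OF EM_C] circ_hom[OF EM_C]] circ_circ_inv[OF EM_C]
    functor_id[OF F] em_act_obj[OF EM_C]
  by metis

lemma F_circ_inv_F_circ:
  "u \<in> EMmon \<Longrightarrow> X \<in> cObj C \<Longrightarrow> cComp D (Fm (circ_inv C u X)) (Fm (circ C u X)) = cId D (Fo X)"
  using functor_comp[OF F circ_hom[OF EM_C] circ_inv_hom[OF EM_C]] circ_inv_circ[OF EM_C]
    functor_id[OF F]
  by metis

lemma iso_inv_F_circ: "u \<in> EMmon \<Longrightarrow> X \<in> cObj C \<Longrightarrow> iso_inv D (Fm (circ C u X)) = Fm (circ_inv C u X)"
  using iso_inv_unique[OF cat_D F_circ_hom F_circ_inv_hom F_circ_inv_F_circ F_circ_F_circ_inv] by blast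

lemma pushC_act_mor:
  "u \<in> EMmon \<Longrightarrow> X \<in> cObj C \<Longrightarrow> pActM P u v (X, g, Y) =
     (pActO C u X, cComp D (Fm (circ C v Y)) (cComp D g (Fm (circ_inv C u X))), pActO C v Y)"
  by (simp add: pushC_def iso_inv_F_circ)

lemma F_circ_simps:
  "X \<in> cObj C \<Longrightarrow> Fo X \<in> cObj D"
  "u \<in> EMmon \<Longrightarrow> X \<in> cObj C \<Longrightarrow> pActO C u X \<in> cObj C"
  "u \<in> EMmon \<Longrightarrow> X \<in> cObj C \<Longrightarrow> Fm (circ C u X) \<in> cMor D"
  "u \<in> EMmon \<Longrightarrow> X \<in> cObj C \<Longrightarrow> cDom D (Fm (circ C u X)) = Fo X"
  "u \<in> EMmon \<Longrightarrow> X \<in> cObj C \<Longrightarrow> cCod D (Fm (circ C u X)) = Fo (pActO C u X)"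
  "u \<in> EMmon \<Longrightarrow> X \<in> cObj C \<Longrightarrow> Fm (circ_inv C u X) \<in> cMor D"
  "u \<in> EMmon \<Longrightarrow> X \<in> cObj C \<Longrightarrow> cDom D (Fm (circ_inv C u X)) = Fo (pActO C u X)"
  "u \<in> EMmon \<Longrightarrow> X \<in> cObj C \<Longrightarrow> cCod D (Fm (circ_inv C u X)) = Fo X"
  "u \<in> EMmon \<Longrightarrow> X \<in> cObj C \<Longrightarrow> k \<in> cMor D \<Longrightarrow> cCod D k = Fo (pActO C u X) \<Longrightarrow>
     cComp D (Fm (circ C u X)) (cComp D (Fm (circ_inv C u X)) k) = k"
  "u \<in> EMmon \<Longrightarrow> X \<in> cObj C \<Longrightarrow> k \<in> cMor D \<Longrightarrow> cCod D k = Fo X \<Longrightarrow>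
     cComp D (Fm (circ_inv C u X)) (cComp D (Fm (circ C u X)) k) = k"
  using functor_obj[OF F] em_act_obj[OF EM_C] F_circ_hom F_circ_inv_hom
    F_circ_F_circ_inv F_circ_inv_F_circ cat_simps[OF cat_D]
  by (auto simp: hom_def) (metis (no_types, lifting))+

lemmas pushC_D_simps = cat_simps[OF cat_D] F_circ_simps F_circ_F_circ_inv F_circ_inv_F_circ

lemma pushC_category: "is_category P"
  unfolding is_category_def
proof (intro conjI ballI impI)
  fix f assume "f \<in> cMor P"
  then show "cDom P f \<in> cObj P" "cCod P f \<in> cObj P"
    by (auto elim!: pushC_morE simp: pushC_simps)
next
  fix X assume "X \<in> cObj P"
  then show "cId P X \<in> hom P X X"
    by (auto simp: pushC_simps pushC_hom intro: cat_id_hom[OF cat_D] functor_obj[OF F])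
next
  fix f g assume "f \<in> cMor P" "g \<in> cMor P" "cCod P f = cDom P g"
  then show "cComp P g f \<in> hom P (cDom P f) (cCod P g)"
    by (auto elim!: pushC_morE simp: pushC_simps pushC_hom intro: cat_comp_hom[OF cat_D])
next
  fix f assume "f \<in> cMor P"
  then show "cComp P (cId P (cCod P f)) f = f" "cComp P f (cId P (cDom P f)) = f"
    by (auto elim!: pushC_morE simp: pushC_simps cat_id_left[OF cat_D] cat_id_right[OF cat_D])
next
  fix f g h assume "f \<in> cMor P" "g \<in> cMor P" "h \<in> cMor P" "cCod P f = cDom P g \<and> cCod P g = cDom P h"
  then show "cComp P h (cComp P g f) = cComp P (cComp P h g) f"
    by (auto elim!: pushC_morE simp: pushC_simps cat_assoc[OF cat_D])
qed

lemma F_circ_comp: "u \<in> EMmon \<Longrightarrow> v \<in> EMmon \<Longrightarrow> Y \<in> cObj C \<Longrightarrow>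
    Fm (circ C (u \<circ> v) Y) = cComp D (Fm (circ C u (pActO C v Y))) (Fm (circ C v Y))"
  using circ_comp[OF EM_C] functor_comp[OF F circ_hom[OF EM_C] circ_hom[OF EM_C]] em_act_obj[OF EM_C]
  by metis

lemma F_circ_inv_comp: "u \<in> EMmon \<Longrightarrow> v \<in> EMmon \<Longrightarrow> X \<in> cObj C \<Longrightarrow>
    Fm (circ_inv C (u \<circ> v) X) = cComp D (Fm (circ_inv C v X)) (Fm (circ_inv C u (pActO C v X)))"
  using circ_inv_comp[OF EM_C] functor_comp[OF F circ_inv_hom[OF EM_C] circ_inv_hom[OF EM_C]]
    em_act_obj[OF EM_C]
  by metis

lemma pushC_act_comp_mor:
  assumes u: "u \<in> EMmon" and u': "u' \<in> EMmon" and v: "v \<in> EMmon" and v': "v' \<in> EMmon"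
    and f: "f \<in> cMor P"
  shows "pActM P (u \<circ> v) (u' \<circ> v') f = pActM P u u' (pActM P v v' f)"
proof -
  obtain X g Y where f_eq: "f = (X, g, Y)" and X: "X \<in> cObj C" and Y: "Y \<in> cObj C"
    and g: "g \<in> hom D (Fo X) (Fo Y)" using f by (rule pushC_morE)
  have vX: "pActO C v X \<in> cObj C" and vY: "pActO C v' Y \<in> cObj C"
    using em_act_obj[OF EM_C] v v' X Y by auto
  have "pActM P (u \<circ> v) (u' \<circ> v') f = (pActO C (u \<circ> v) X, cComp D (Fm (circ C (u' \<circ> v') Y))
      (cComp D g (Fm (circ_inv C (u \<circ> v) X))), pActO C (u' \<circ> v') Y)"
    using pushC_act_mor[OF EMmon_comp[OF u v] X] f_eq by simp
  also have "\<dots> = (pActO C u (pActO C v X),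
      cComp D (cComp D (Fm (circ C u' (pActO C v' Y))) (Fm (circ C v' Y)))
        (cComp D g (cComp D (Fm (circ_inv C v X)) (Fm (circ_inv C u (pActO C v X))))),
      pActO C u' (pActO C v' Y))"
    using F_circ_comp[OF u' v' Y] F_circ_inv_comp[OF u v X] em_act_comp[OF EM_C u v X]
      em_act_comp[OF EM_C u' v' Y] by simp
  also have "\<dots> = pActM P u u' (pActM P v v' f)"
    using pushC_act_mor[OF v X] pushC_act_mor[OF u vX] f_eq u u' v v' X Y vX vY g
    by (simp add: hom_def pushC_D_simps)
  finally show ?thesis .
qed

lemma pushC_EM_category: "is_EM_category P"
  unfolding is_EM_category_def
proof (intro conjI ballI impI pushC_category)
  fix u X assume "u \<in> EMmon" "X \<in> cObj P"
  then show "pActO P u X \<in> cObj P" by (simp add: pushC_simps em_act_obj[OF EM_C])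
next
  fix u v f assume "u \<in> EMmon" "v \<in> EMmon" "f \<in> cMor P"
  then show "pActM P u v f \<in> hom P (pActO P u (cDom P f)) (pActO P v (cCod P f))"
    by (auto elim!: pushC_morE simp: pushC_simps pushC_hom pushC_act_mor hom_def pushC_D_simps)
next
  fix u X assume "u \<in> EMmon" "X \<in> cObj P"
  then show "pActM P u u (cId P X) = cId P (pActO P u X)"
    by (auto simp: pushC_simps pushC_act_mor pushC_D_simps)
next
  fix u v w f g assume "u \<in> EMmon" "v \<in> EMmon" "w \<in> EMmon" "f \<in> cMor P" "g \<in> cMor P"
    "cCod P f = cDom P g"
  then show "cComp P (pActM P v w g) (pActM P u v f) = pActM P u w (cComp P g f)"
    by (auto elim!: pushC_morE simp: pushC_simps pushC_act_mor hom_def pushC_D_simps)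
next
  fix X assume "X \<in> cObj P"
  then show "pActO P id X = X" by (simp add: pushC_simps em_act_id_obj[OF EM_C])
next
  fix f assume "f \<in> cMor P"
  then show "pActM P id id f = f"
    by (auto elim!: pushC_morE simp: pushC_act_mor[OF id_in_EMmon] em_act_id_obj[OF EM_C]
        circ_id[OF EM_C] circ_inv_id[OF EM_C] functor_id[OF F]
        cat_id_left[OF cat_D] cat_id_right[OF cat_D])
next
  fix u v X assume "u \<in> EMmon" "v \<in> EMmon" "X \<in> cObj P"
  then show "pActO P (u \<circ> v) X = pActO P u (pActO P v X)"
    by (simp add: pushC_simps em_act_comp[OF EM_C])
next
  fix u u' v v' f assume "u \<in> EMmon" "u' \<in> EMmon" "v \<in> EMmon" "v' \<in> EMmon" "f \<in> cMor P"
  then show "pActM P (u \<circ> v) (u' \<circ> v') f = pActM P u u' (pActM P v v' f)"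
    by (rule pushC_act_comp_mor)
qed

lemma F_disjM:
  "a \<in> hom D (Fo X) (Fo Y) \<Longrightarrow> b \<in> hom D (Fo X') (Fo Y') \<Longrightarrow> X \<in> cObj C \<Longrightarrow> X' \<in> cObj C \<Longrightarrow>
    Y \<in> cObj C \<Longrightarrow> Y' \<in> cObj C \<Longrightarrow> disj C X X' \<Longrightarrow> disj C Y Y' \<Longrightarrow> disjM D a b"
  by (rule disjM_homI, assumption, assumption) (rule F_disj; assumption)+

lemma pushC_disjME:
  assumes "disjM P f g"
  obtains X a Y X' b Y' where "f = (X, a, Y)" "g = (X', b, Y')" "X \<in> cObj C" "X' \<in> cObj C"
    "Y \<in> cObj C" "Y' \<in> cObj C" "a \<in> hom D (Fo X) (Fo Y)" "b \<in> hom D (Fo X') (Fo Y')"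
    "disj C X X'" "disj C Y Y'"
  using assms by (cases f; cases g) (auto simp: pushC_disjM)

lemma pushC_plus_hom:
  assumes "disjM P f g"
  shows "pPlusM P f g \<in> hom P (pPlusO P (cDom P f) (cDom P g)) (pPlusO P (cCod P f) (cCod P g))"
  using assms
proof (rule pushC_disjME)
  fix X a Y X' b Y'
  assume fg: "f = (X, a, Y)" "g = (X', b, Y')"
    and objs: "X \<in> cObj C" "X' \<in> cObj C" "Y \<in> cObj C" "Y' \<in> cObj C"
    and ab: "a \<in> hom D (Fo X) (Fo Y)" "b \<in> hom D (Fo X') (Fo Y')" and disj: "disj C X X'" "disj C Y Y'"
  have "pPlusM D a b \<in> hom D (pPlusO D (Fo X) (Fo X')) (pPlusO D (Fo Y) (Fo Y'))"
    using ps_plus_hom[OF parsummable_D F_disjM[OF ab objs disj]] ab by (simp add: hom_def)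
  then show ?thesis
    using fg objs disj ps_plus_obj[OF parsummable_C] F_plus_obj
    by (simp add: pushC_simps pushC_hom)
qed

lemma F_plus_interchange:
  assumes a: "a \<in> hom D (Fo X) (Fo Y)" "a' \<in> hom D (Fo X') (Fo Y')"
    and b: "b \<in> hom D (Fo Y) (Fo Z)" "b' \<in> hom D (Fo Y') (Fo Z')"
    and objs: "X \<in> cObj C" "X' \<in> cObj C" "Y \<in> cObj C" "Y' \<in> cObj C" "Z \<in> cObj C" "Z' \<in> cObj C"
    and disj: "disj C X X'" "disj C Y Y'" "disj C Z Z'"
  shows "pPlusM D (cComp D b a) (cComp D b' a') = cComp D (pPlusM D b b') (pPlusM D a a')"
  using ps_plus_interchange[OF parsummable_D F_disjM[OF a objs(1-4) disj(1,2)]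
      F_disjM[OF b objs(3-6) disj(2,3)]] a b
  by (simp add: hom_def)

lemma pushC_plus_interchange:
  assumes "disjM P f f'" "disjM P g g'" "cCod P f = cDom P g" "cCod P f' = cDom P g'"
  shows "pPlusM P (cComp P g f) (cComp P g' f') = cComp P (pPlusM P g g') (pPlusM P f f')"
  using assms(1)
proof (rule pushC_disjME)
  fix X a Y X' a' Y'
  assume f: "f = (X, a, Y)" "f' = (X', a', Y')"
    and objs: "X \<in> cObj C" "X' \<in> cObj C" "Y \<in> cObj C" "Y' \<in> cObj C"
    and a: "a \<in> hom D (Fo X) (Fo Y)" "a' \<in> hom D (Fo X') (Fo Y')" and disj: "disj C X X'" "disj C Y Y'"
  from assms(2) show ?thesis
  proof (rule pushC_disjME)
    fix Y2 b Z Y2' b' Z'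
    assume g: "g = (Y2, b, Z)" "g' = (Y2', b', Z')" and objs': "Z \<in> cObj C" "Z' \<in> cObj C"
      and b: "b \<in> hom D (Fo Y2) (Fo Z)" "b' \<in> hom D (Fo Y2') (Fo Z')" and disj': "disj C Z Z'"
    have Y2: "Y2 = Y" "Y2' = Y'" using assms(3,4) f g by (simp_all add: pushC_simps)
    show ?thesis
      using F_plus_interchange[OF a b[unfolded Y2] objs objs' disj disj']
      by (simp add: f g Y2 pushC_simps)
  qed
qed

lemma pushC_plus_assoc_mor:
  assumes "disjM P f g" "disjM P f h" "disjM P g h"
  shows "pPlusM P (pPlusM P f g) h = pPlusM P f (pPlusM P g h)"
proof -
  obtain X a Y X' b Y' X'' c Y'' where fgh: "f = (X, a, Y)" "g = (X', b, Y')" "h = (X'', c, Y'')"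
    by (cases f; cases g; cases h) simp
  have objs: "X \<in> cObj C" "Y \<in> cObj C" "X' \<in> cObj C" "Y' \<in> cObj C" "X'' \<in> cObj C" "Y'' \<in> cObj C"
    and abc: "a \<in> hom D (Fo X) (Fo Y)" "b \<in> hom D (Fo X') (Fo Y')" "c \<in> hom D (Fo X'') (Fo Y'')"
    and disj: "disj C X X'" "disj C Y Y'" "disj C X X''" "disj C Y Y''" "disj C X' X''" "disj C Y' Y''"
    using assms fgh pushC_disjM by auto
  show ?thesis
    using ps_plus_assoc_mor[OF parsummable_D F_disjM[OF abc(1,2) objs(1,3,2,4) disj(1,2)]
        F_disjM[OF abc(1,3) objs(1,5,2,6) disj(3,4)] F_disjM[OF abc(2,3) objs(3,5,4,6) disj(5,6)]]
      ps_plus_assoc_obj[OF parsummable_C objs(1,3,5) disj(1,3,5)]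
      ps_plus_assoc_obj[OF parsummable_C objs(2,4,6) disj(2,4,6)]
    by (simp add: fgh pushC_simps)
qed

lemma pushC_plus_comm_mor:
  assumes "disjM P f g"
  shows "pPlusM P f g = pPlusM P g f"
  using assms
proof (rule pushC_disjME)
  fix X a Y X' b Y'
  assume fg: "f = (X, a, Y)" "g = (X', b, Y')"
    and objs: "X \<in> cObj C" "X' \<in> cObj C" "Y \<in> cObj C" "Y' \<in> cObj C"
    and ab: "a \<in> hom D (Fo X) (Fo Y)" "b \<in> hom D (Fo X') (Fo Y')" and disj: "disj C X X'" "disj C Y Y'"
  show ?thesis
    using ps_plus_comm_mor[OF parsummable_D F_disjM[OF ab objs disj]]
      ps_plus_comm_obj[OF parsummable_C objs(1,2) disj(1)]
      ps_plus_comm_obj[OF parsummable_C objs(3,4) disj(2)]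
    by (simp add: fg pushC_simps)
qed

lemma pushC_act_plus_mor:
  assumes u: "u \<in> EMmon" and v: "v \<in> EMmon" and "disjM P f g"
  shows "pActM P u v (pPlusM P f g) = pPlusM P (pActM P u v f) (pActM P u v g)"
  using assms(3)
proof (rule pushC_disjME)
  fix X a Y X' b Y'
  assume fg: "f = (X, a, Y)" "g = (X', b, Y')"
    and objs: "X \<in> cObj C" "X' \<in> cObj C" "Y \<in> cObj C" "Y' \<in> cObj C"
    and ab: "a \<in> hom D (Fo X) (Fo Y)" "b \<in> hom D (Fo X') (Fo Y')" and disj: "disj C X X'" "disj C Y Y'"
  have uX: "pActO C u X \<in> cObj C" "pActO C u X' \<in> cObj C" "disj C (pActO C u X) (pActO C u X')"
    using em_act_obj[OF EM_C u] objs disj_act[OF ps_tame[OF parsummable_C] _ _ u] disj by auto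
  have vY: "pActO C v Y \<in> cObj C" "pActO C v Y' \<in> cObj C" "disj C (pActO C v Y) (pActO C v Y')"
    using em_act_obj[OF EM_C v] objs disj_act[OF ps_tame[OF parsummable_C] _ _ v] disj by auto
  have F_circ_plus: "Fm (circ C v (pPlusO C Y Y')) = pPlusM D (Fm (circ C v Y)) (Fm (circ C v Y'))"
    using ps_circ_plus[OF parsummable_C v objs(3,4) disj(2)]
      F_plus_mor[OF disjM_homI[OF circ_hom[OF EM_C v objs(3)] circ_hom[OF EM_C v objs(4)] disj(2)
          vY(3)]]
    by simp
  have F_circ_inv_plus:
    "Fm (circ_inv C u (pPlusO C X X')) = pPlusM D (Fm (circ_inv C u X)) (Fm (circ_inv C u X'))"
    using ps_circ_inv_plus[OF parsummable_C u objs(1,2) disj(1)]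
      F_plus_mor[OF disjM_homI[OF circ_inv_hom[OF EM_C u objs(1)] circ_inv_hom[OF EM_C u objs(2)]
          uX(3) disj(1)]]
    by simp
  have "pPlusM D (cComp D (Fm (circ C v Y)) (cComp D a (Fm (circ_inv C u X))))
                 (cComp D (Fm (circ C v Y')) (cComp D b (Fm (circ_inv C u X'))))
      = cComp D (pPlusM D (Fm (circ C v Y)) (Fm (circ C v Y')))
          (cComp D (pPlusM D a b) (pPlusM D (Fm (circ_inv C u X)) (Fm (circ_inv C u X'))))"
    using F_plus_interchange[OF cat_comp_hom[OF cat_D F_circ_inv_hom[OF u objs(1)] ab(1)]
        cat_comp_hom[OF cat_D F_circ_inv_hom[OF u objs(2)] ab(2)] F_circ_hom[OF v objs(3)]
        F_circ_hom[OF v objs(4)] uX(1,2) objs(3,4) vY(1,2) uX(3) disj(2) vY(3)]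
      F_plus_interchange[OF F_circ_inv_hom[OF u objs(1)] F_circ_inv_hom[OF u objs(2)] ab uX(1,2)
          objs uX(3) disj]
    by simp
  then show ?thesis
    using pushC_act_mor[OF u ps_plus_obj[OF parsummable_C objs(1,2) disj(1)]]
      pushC_act_mor[OF u objs(1)] pushC_act_mor[OF u objs(2)]
      ps_act_plus_obj[OF parsummable_C u objs(1,2) disj(1)]
      ps_act_plus_obj[OF parsummable_C v objs(3,4) disj(2)]
      F_circ_plus F_circ_inv_plus
    by (simp add: fg pushC_simps)
qed

lemma pushC_parsummable: "parsummable P"
  unfolding parsummable_def is_tame_def
proof (intro conjI allI ballI impI pushC_EM_category)
  fix X assume "X \<in> cObj P"
  then show "finite (em_supp P X)"
    using ps_tame[OF parsummable_C] by (simp add: pushC_em_supp pushC_simps is_tame_def)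
next
  show "pZero P \<in> cObj P" "em_supp P (pZero P) = {}"
    by (simp_all add: pushC_simps pushC_em_supp ps_zero[OF parsummable_C])
next
  fix X Y assume "X \<in> cObj P" "Y \<in> cObj P" "disj P X Y"
  then show "pPlusO P X Y \<in> cObj P"
    by (simp add: pushC_simps pushC_disj ps_plus_obj[OF parsummable_C])
next
  fix f g assume "disjM P f g"
  then show "pPlusM P f g \<in> hom P (pPlusO P (cDom P f) (cDom P g)) (pPlusO P (cCod P f) (cCod P g))"
    by (rule pushC_plus_hom)
next
  fix X Y assume "X \<in> cObj P" "Y \<in> cObj P" "disj P X Y"
  then have XY: "X \<in> cObj C" "Y \<in> cObj C" "disj C X Y" by (simp_all add: pushC_simps pushC_disj)
  show "pPlusM P (cId P X) (cId P Y) = cId P (pPlusO P X Y)"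
    using ps_plus_id[OF parsummable_D functor_obj[OF F XY(1)] functor_obj[OF F XY(2)] F_disj[OF XY]]
      F_plus_obj[OF XY]
    by (simp add: pushC_simps)
next
  fix f f' g g' assume "disjM P f f' \<and> disjM P g g' \<and> cCod P f = cDom P g \<and> cCod P f' = cDom P g'"
  then show "pPlusM P (cComp P g f) (cComp P g' f') = cComp P (pPlusM P g g') (pPlusM P f f')"
    using pushC_plus_interchange by blast
next
  fix X assume "X \<in> cObj P"
  then show "pPlusO P (pZero P) X = X" "pPlusO P X (pZero P) = X"
    using ps_zero_unit_obj[OF parsummable_C] by (simp_all add: pushC_simps)
next
  fix f assume "f \<in> cMor P"
  then show "pPlusM P (cId P (pZero P)) f = f" "pPlusM P f (cId P (pZero P)) = f"
    by (auto elim!: pushC_morE simp: hom_def pushC_simps F_zero ps_zero_unit_obj[OF parsummable_C]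
        ps_zero_unit_mor[OF parsummable_D])
next
  fix X Y Z assume "X \<in> cObj P" "Y \<in> cObj P" "Z \<in> cObj P" "disj P X Y \<and> disj P X Z \<and> disj P Y Z"
  then show "pPlusO P (pPlusO P X Y) Z = pPlusO P X (pPlusO P Y Z)"
    using ps_plus_assoc_obj[OF parsummable_C] by (simp add: pushC_simps pushC_disj)
next
  fix f g h assume "disjM P f g \<and> disjM P f h \<and> disjM P g h"
  then show "pPlusM P (pPlusM P f g) h = pPlusM P f (pPlusM P g h)"
    using pushC_plus_assoc_mor by blast
next
  fix X Y assume "X \<in> cObj P" "Y \<in> cObj P" "disj P X Y"
  then show "pPlusO P X Y = pPlusO P Y X"
    using ps_plus_comm_obj[OF parsummable_C] by (simp add: pushC_simps pushC_disj)
next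
  fix f g assume "disjM P f g"
  then show "pPlusM P f g = pPlusM P g f" by (rule pushC_plus_comm_mor)
next
  fix u X Y assume "u \<in> EMmon" "X \<in> cObj P" "Y \<in> cObj P" "disj P X Y"
  then show "pActO P u (pPlusO P X Y) = pPlusO P (pActO P u X) (pActO P u Y)"
    using ps_act_plus_obj[OF parsummable_C] by (simp add: pushC_simps pushC_disj)
next
  fix u v f g assume "u \<in> EMmon" "v \<in> EMmon" "disjM P f g"
  then show "pActM P u v (pPlusM P f g) = pPlusM P (pActM P u v f) (pActM P u v g)"
    by (rule pushC_act_plus_mor)
qed

lemma I_functor: "is_functor C P (\<lambda>X. X) (I_mor C Fm)"
  unfolding is_functor_def
proof (intro conjI ballI impI cat_C pushC_category)
  fix X assume "X \<in> cObj C" then show "X \<in> cObj P" by (simp add: pushC_simps)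
next
  fix f assume f: "f \<in> cMor C"
  show "I_mor C Fm f \<in> hom P (cDom C f) (cCod C f)"
    using cat_mor_objs[OF cat_C f] functor_hom[OF F mor_in_hom[OF f]] by (simp add: I_mor_def pushC_hom)
next
  fix X assume X: "X \<in> cObj C"
  show "I_mor C Fm (cId C X) = cId P X"
    using homD[OF cat_id_hom[OF cat_C X]] functor_id[OF F X] by (simp add: I_mor_def pushC_simps)
next
  fix f g assume f: "f \<in> cMor C" and g: "g \<in> cMor C" and fg: "cCod C f = cDom C g"
  have hf: "f \<in> hom C (cDom C f) (cDom C g)" using mor_in_hom[OF f] fg by simp
  have hg: "g \<in> hom C (cDom C g) (cCod C g)" using mor_in_hom[OF g] .
  show "I_mor C Fm (cComp C g f) = cComp P (I_mor C Fm g) (I_mor C Fm f)"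
    using homD[OF cat_comp_hom[OF cat_C hf hg]] functor_comp[OF F hf hg] by (simp add: I_mor_def
      pushC_simps)
qed

lemma I_act_mor:
  assumes u: "u \<in> EMmon" and v: "v \<in> EMmon" and f: "f \<in> cMor C"
  shows "I_mor C Fm (pActM C u v f) = pActM P u v (I_mor C Fm f)"
proof -
  let ?X = "cDom C f" and ?Y = "cCod C f"
  have X: "?X \<in> cObj C" using cat_mor_objs[OF cat_C f] by simp
  have "Fm (pActM C u v f) = cComp D (Fm (circ C v ?Y)) (cComp D (Fm f) (Fm (circ_inv C u ?X)))"
    using em_act_mor_decomp[OF EM_C u v mor_in_hom[OF f]]
      functor_comp[OF F cat_comp_hom[OF cat_C circ_inv_hom[OF EM_C u X] mor_in_hom[OF f]]
        circ_hom[OF EM_C v cat_mor_objs[OF cat_C f, THEN conjunct2]]]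
      functor_comp[OF F circ_inv_hom[OF EM_C u X] mor_in_hom[OF f]]
    by simp
  then show ?thesis
    using homD[OF em_act_hom[OF EM_C u v mor_in_hom[OF f]]] pushC_act_mor[OF u X]
    by (simp add: I_mor_def)
qed

lemma I_ps_morphism: "ps_morphism C P (\<lambda>X. X) (I_mor C Fm)"
  unfolding ps_morphism_def
proof (intro conjI ballI allI impI parsummable_C pushC_parsummable I_functor)
  fix u X assume "u \<in> EMmon" "X \<in> cObj C"
  then show "pActO C u X = pActO P u X" by (simp add: pushC_simps)
next
  fix u v f assume "u \<in> EMmon" "v \<in> EMmon" "f \<in> cMor C"
  then show "I_mor C Fm (pActM C u v f) = pActM P u v (I_mor C Fm f)" by (rule I_act_mor)
next
  show "pZero C = pZero P" by (simp add: pushC_simps)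
next
  fix X Y assume "X \<in> cObj C" "Y \<in> cObj C" "disj C X Y"
  then show "pPlusO C X Y = pPlusO P X Y" by (simp add: pushC_simps)
next
  fix f g assume fg: "disjM C f g"
  show "I_mor C Fm (pPlusM C f g) = pPlusM P (I_mor C Fm f) (I_mor C Fm g)"
    using homD[OF ps_plus_hom[OF parsummable_C fg]] F_plus_mor[OF fg] by (simp add: I_mor_def
      pushC_simps)
qed

lemma Fhat_functor: "is_functor P D Fo Fhat_mor"
  unfolding is_functor_def
proof (intro conjI ballI impI cat_D pushC_category)
  fix X assume "X \<in> cObj P" then show "Fo X \<in> cObj D" using functor_obj[OF F] by (simp add: pushC_simps)
next
  fix f assume "f \<in> cMor P" then show "Fhat_mor f \<in> hom D (Fo (cDom P f)) (Fo (cCod P f))"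
    by (auto elim!: pushC_morE simp: pushC_simps Fhat_mor_def)
next
  fix X assume "X \<in> cObj P" then show "Fhat_mor (cId P X) = cId D (Fo X)"
    by (simp add: pushC_simps Fhat_mor_def)
next
  fix f g assume "f \<in> cMor P" "g \<in> cMor P" "cCod P f = cDom P g"
  then show "Fhat_mor (cComp P g f) = cComp D (Fhat_mor g) (Fhat_mor f)"
    by (auto elim!: pushC_morE simp: pushC_simps Fhat_mor_def)
qed

lemma Fhat_fully_faithful: "fully_faithful P D Fo Fhat_mor"
  unfolding fully_faithful_def
proof (intro ballI)
  fix X Y assume "X \<in> cObj P" "Y \<in> cObj P"
  then have "hom P X Y = (\<lambda>g. (X, g, Y)) ` hom D (Fo X) (Fo Y)"
    by (auto simp: pushC_simps pushC_hom hom_def[of P])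
  then show "bij_betw Fhat_mor (hom P X Y) (hom D (Fo X) (Fo Y))"
    by (simp add: bij_betw_def inj_on_def Fhat_mor_def image_image)
qed

lemma Fhat_equivalence: "ess_surj C D Fo \<Longrightarrow> is_equivalence P D Fo Fhat_mor"
  by (rule fully_faithful_ess_surj_equivalence[OF Fhat_functor Fhat_fully_faithful])
    (simp add: ess_surj_def pushC_simps)

end

theorem lemma3p10:
  fixes C :: "('a, 'b) pcat" and D :: "('c, 'd) pcat"
    and Fo :: "'a \<Rightarrow> 'c" and Fm :: "'b \<Rightarrow> 'd"
  assumes "parsummable C" and "parsummable D"
    and "is_functor C D Fo Fm" and "preserves_sums C D Fo Fm"
  shows "ps_morphism C (pushC C D Fo Fm) (\<lambda>X. X) (I_mor C Fm)
       \<and> (ess_surj C D Fo \<longrightarrow> is_equivalence (pushC C D Fo Fm) D Fo Fhat_mor)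
       \<and> (\<forall>X\<in>cObj C. Fo X = Fo ((\<lambda>X. X) X))
       \<and> (\<forall>f\<in>cMor C. Fm f = Fhat_mor (I_mor C Fm f))"
proof -
  interpret sum_preserving_functor C D Fo Fm
    using assms by unfold_locales
  show ?thesis
    using I_ps_morphism Fhat_equivalence by (simp add: I_mor_def Fhat_mor_def)
qed

end
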